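(* Let $G$ be the full group of a Bratteli diagram whose path space $X$ is a Cantor set and on which $G$ acts minimally. Let $s\in G$ and $A=supp(s)$. Then for any $r\in\mathbb N$ and any $\varepsilon>0$ there exist elements $s_1,\dots,s_{2^r}\in G$ such that: (1) each $s_i$ is conjugate in $G$ to $s$; (2) $supp(s_i)=A$ for all $i$, and $\mu\bigl(A\setminus supp(s_is_j^{-1})\bigr)<\varepsilon$ for all $1\le i\ne j\le 2^r$ and all $\mu\in\mathcal M(G)$; (3) for all $i\ne j$, the element $s_is_j^{-1}$ consists of even cycles.
   Context: Bratteli diagram: vertex levels $V_0=\{v_0\},V_1,\dots$, finite edge sets $E_n$ from $V_{n-1}$ to $V_n$. Path space $X$: infinite paths from $v_0$ with the cylinder topology. Full group $G=\bigcup_nG_n$, where $G_n$ consists of the homeomorphisms of $X$ that replace the first $n$ edges of a path by another path from $v_0$ to the same vertex of $V_n$ (depending only on these $n$ edges) and keep the remaining edges. $supp(g)=\{x:g(x)\ne x\}$. $\mathcal M(G)$: $G$-invariant Borel probability measures on $X$. An element $g$ consists of even cycles if the $g$-period of each point is $1$ or even. *)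

theory Defs
  imports "HOL-Analysis.Analysis" "HOL-Probability.Probability"
begin

definition bratteli :: "(nat \<Rightarrow> 'v set) \<Rightarrow> (nat \<Rightarrow> 'e set) \<Rightarrow> ('e \<Rightarrow> 'v) \<Rightarrow> ('e \<Rightarrow> 'v) \<Rightarrow> 'v \<Rightarrow> bool"
  where "bratteli V E src rng v0 \<longleftrightarrow>
     V 0 = {v0} \<and> (\<forall>n. finite (V n)) \<and> (\<forall>n. finite (E n)) \<and>
     (\<forall>n. \<forall>e \<in> E (Suc n). src e \<in> V n \<and> rng e \<in> V (Suc n))"

definition path_space :: "(nat \<Rightarrow> 'e set) \<Rightarrow> ('e \<Rightarrow> 'v) \<Rightarrow> ('e \<Rightarrow> 'v) \<Rightarrow> 'v \<Rightarrow> (nat \<Rightarrow> 'e) set"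
  where "path_space E src rng v0 =
     {x. (\<forall>k. x k \<in> E (Suc k)) \<and> src (x 0) = v0 \<and> (\<forall>k. rng (x k) = src (x (Suc k)))}"

definition cyl_top :: "(nat \<Rightarrow> 'e) set \<Rightarrow> (nat \<Rightarrow> 'e) topology"
  where "cyl_top X = subtopology (product_topology (\<lambda>_. discrete_topology UNIV) UNIV) X"

definition cantor_ternary :: "real set"
  where "cantor_ternary = {t. \<exists>d::nat \<Rightarrow> nat. (\<forall>n. d n \<in> {0,2}) \<and>
                                  (\<lambda>n. real (d n) / 3 ^ Suc n) sums t}"

definition is_cantor_space :: "'a topology \<Rightarrow> bool"
  where "is_cantor_space T \<longleftrightarrow> T homeomorphic_space subtopology euclideanreal cantor_ternary"

text \<open>G_n: homeomorphisms of X changing only the first n edges, depending only on them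
  (the new prefix automatically ends at the same vertex since the image lies in X).
  Elements are represented as maps on the whole function type that are the identity
  off X.\<close>
definition full_group_n :: "(nat \<Rightarrow> 'e) set \<Rightarrow> nat \<Rightarrow> ((nat \<Rightarrow> 'e) \<Rightarrow> (nat \<Rightarrow> 'e)) set"
  where "full_group_n X n = {g.
     homeomorphic_map (cyl_top X) (cyl_top X) g \<and>
     (\<forall>x. x \<notin> X \<longrightarrow> g x = x) \<and>
     (\<forall>x\<in>X. \<forall>k\<ge>n. g x k = x k) \<and>
     (\<forall>x\<in>X. \<forall>y\<in>X. (\<forall>k<n. x k = y k) \<longrightarrow> (\<forall>k<n. g x k = g y k))}"

definition full_group :: "(nat \<Rightarrow> 'e) set \<Rightarrow> ((nat \<Rightarrow> 'e) \<Rightarrow> (nat \<Rightarrow> 'e)) set"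
  where "full_group X = (\<Union>n. full_group_n X n)"

definition supp :: "(nat \<Rightarrow> 'e) set \<Rightarrow> ((nat \<Rightarrow> 'e) \<Rightarrow> (nat \<Rightarrow> 'e)) \<Rightarrow> (nat \<Rightarrow> 'e) set"
  where "supp X g = {x \<in> X. g x \<noteq> x}"

definition minimal_action :: "(nat \<Rightarrow> 'e) set \<Rightarrow> bool"
  where "minimal_action X \<longleftrightarrow>
     (\<forall>x\<in>X. (cyl_top X) closure_of {g x | g. g \<in> full_group X} = X)"

definition inv_measures :: "(nat \<Rightarrow> 'e) set \<Rightarrow> (nat \<Rightarrow> 'e) measure set"
  where "inv_measures X = {\<mu>. prob_space \<mu> \<and> space \<mu> = X \<and>
     sets \<mu> = sigma_sets X {U. openin (cyl_top X) U} \<and>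
     (\<forall>g \<in> full_group X. \<forall>B \<in> sets \<mu>. emeasure \<mu> (g -` B \<inter> X) = emeasure \<mu> B)}"

definition conj_in :: "(nat \<Rightarrow> 'e) set \<Rightarrow> ((nat \<Rightarrow> 'e) \<Rightarrow> (nat \<Rightarrow> 'e)) \<Rightarrow> ((nat \<Rightarrow> 'e) \<Rightarrow> (nat \<Rightarrow> 'e)) \<Rightarrow> bool"
  where "conj_in X a b \<longleftrightarrow> (\<exists>h \<in> full_group X. a = h \<circ> b \<circ> inv h)"

definition period :: "('a \<Rightarrow> 'a) \<Rightarrow> 'a \<Rightarrow> nat"
  where "period g x = (LEAST p. 0 < p \<and> (g ^^ p) x = x)"

definition even_cycles :: "(nat \<Rightarrow> 'e) set \<Rightarrow> ((nat \<Rightarrow> 'e) \<Rightarrow> (nat \<Rightarrow> 'e)) \<Rightarrow> bool"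
  where "even_cycles X g \<longleftrightarrow>
     (\<forall>x\<in>X. (\<exists>p>0. (g ^^ p) x = x) \<and> (period g x = 1 \<or> even (period g x)))"

end

theory Submission
  imports Defs
begin

text \<open>Write \<open>s \<in> G\<close> as a permutation \<open>\<sigma>\<close> of the paths of some length \<open>n\<close> fixing their end vertices,
  and colour the prefixes moved by \<open>\<sigma>\<close> with three colours so that \<open>p\<close> and \<open>\<sigma> p\<close> always differ.
  For large \<open>m\<close> every path of length \<open>m\<close> is \<open>p @ q\<close> with \<open>q\<close> a segment from level \<open>n\<close> to
  level \<open>m\<close>, and the group \<open>(\<int>/2)\<^sup>2\<^sup>r\<close> acts on the segments with given end points, freely
  except on fewer than \<open>2\<^sup>2\<^sup>r\<close> of them. For \<open>a \<in> (\<int>/2)\<^sup>r\<close> let the involution \<open>h\<^sub>a\<close> act on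
  \<open>p @ q\<close>, for moved \<open>p\<close>, by the image of \<open>a\<close> under the embedding into \<open>(\<int>/2)\<^sup>2\<^sup>r\<close> selected
  by the colour of \<open>p\<close> (zero, first or second factor), and put \<open>s\<^sub>a = h\<^sub>a s h\<^sub>a\<close>. Then
  \<open>s\<^sub>a s\<^sub>b\<^sup>-\<^sup>1\<close> acts on \<open>p @ q\<close> by the sum of the embeddings of \<open>a + b\<close> for the colours of \<open>p\<close> and
  \<open>\<sigma>\<^sup>-\<^sup>1 p\<close>, which is nonzero for \<open>a \<noteq> b\<close>. So \<open>s\<^sub>a s\<^sub>b\<^sup>-\<^sup>1\<close> is an involution fixing a point of
  \<open>supp s\<close> only if its segment is one of the few bad ones. Minimality and compactness make all
  end-vertex classes of paths of length \<open>m\<close> large, so the bad paths have many disjoint translates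
  under \<open>G\<close> and hence small measure for every invariant measure.\<close>

unbundle bit_operations_syntax

section \<open>Finite combinatorics\<close>

lemma xor_less_power2:
  fixes x y :: nat
  assumes "x < 2 ^ j" "y < 2 ^ j"
  shows "x XOR y < 2 ^ j"
  using assms by (metis take_bit_nat_eq_self_iff take_bit_xor)

lemma xor_eq_left_iff: "(x::nat) XOR d = x \<longleftrightarrow> d = 0"
  by (metis xor.assoc xor.left_neutral xor.right_neutral xor_self_eq)

lemma xor_eq_0_iff: "(x::nat) XOR y = 0 \<longleftrightarrow> x = y"
  by (metis xor.assoc xor.left_neutral xor_self_eq xor.commute)

lemma ex_enumeration_subset_first:
  assumes "finite Z" "B \<subseteq> Z"
  shows "\<exists>e. bij_betw e {0..<card Z} Z \<and> e ` {0..<card B} = B"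
proof -
  define b where "b = card B"
  have "finite B" "b \<le> card Z" using assms b_def by (auto intro: finite_subset card_mono)
  obtain e1 where e1: "bij_betw e1 {0..<b} B"
    using ex_bij_betw_nat_finite[OF \<open>finite B\<close>] b_def by blast
  obtain e2 where e2: "bij_betw e2 {0..<card Z - b} (Z - B)"
    using ex_bij_betw_nat_finite[of "Z - B"] assms card_Diff_subset[OF \<open>finite B\<close> assms(2)] b_def
    by auto
  have shift: "bij_betw (\<lambda>i. i - b) {b..<card Z} {0..<card Z - b}"
    by (auto simp: bij_betw_def inj_on_def image_minus_const_atLeastLessThan_nat)
  define e where "e i = (if i < b then e1 i else e2 (i - b))" for i
  have low: "bij_betw e {0..<b} B"
    using e1 by (rule bij_betw_cong[THEN iffD1, rotated]) (simp add: e_def)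
  have "bij_betw e {b..<card Z} (Z - B)"
    using bij_betw_trans[OF shift e2] by (rule bij_betw_cong[THEN iffD1, rotated]) (simp add: e_def)
  with low have "bij_betw e ({0..<b} \<union> {b..<card Z}) (B \<union> (Z - B))"
    by (rule bij_betw_combine) blast
  moreover have "{0..<b} \<union> {b..<card Z} = {0..<card Z}" "B \<union> (Z - B) = Z"
    using \<open>b \<le> card Z\<close> assms(2) by auto
  ultimately show ?thesis using low b_def by (auto simp: bij_betw_def)
qed

text \<open>The numbers below \<open>2 ^ j\<close> with \<open>XOR\<close> form the group \<open>(\<int>/2)\<^sup>j\<close>.\<close>
definition xor_action :: "nat \<Rightarrow> 'a set \<Rightarrow> (nat \<Rightarrow> 'a \<Rightarrow> 'a) \<Rightarrow> bool" where
  "xor_action K Z act \<longleftrightarrow>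
     (\<forall>d<K. \<forall>c\<in>Z. act d c \<in> Z) \<and> (\<forall>c\<in>Z. act 0 c = c) \<and>
     (\<forall>d<K. \<forall>d'<K. \<forall>c\<in>Z. act d (act d' c) = act (d XOR d') c)"

lemma block_index_bounds:
  fixes i b K L :: nat
  assumes "i < L div K * K" "b < K"
  shows "i div K * K + b < L div K * K" "(i div K * K + b) div K = i div K"
    "(i div K * K + b) mod K = b"
proof -
  have "i div K < L div K" using assms by (metis div_less_iff_less_mult gr_zeroI not_less0)
  then have "(i div K + 1) * K \<le> L div K * K" by (intro mult_le_mono1) simp
  then show "i div K * K + b < L div K * K" using assms by (simp add: algebra_simps)
  show "(i div K * K + b) div K = i div K" "(i div K * K + b) mod K = b" using assms by simp_all
qed

text \<open>Cut an enumeration of \<open>Z\<close> into blocks of length \<open>2 ^ j\<close> and let \<open>d\<close> act on each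
  block by \<open>XOR\<close> on the position within the block; the remainder is the bad set.\<close>
lemma ex_xor_action_free_off_small_set:
  assumes "finite Z"
  shows "\<exists>act bad. xor_action (2 ^ j) Z act \<and> (\<forall>c\<in>Z - bad. \<forall>d<2 ^ j. act d c = c \<longrightarrow> d = 0) \<and>
           bad \<subseteq> Z \<and> card bad < 2 ^ j"
proof -
  define K :: nat where "K = 2 ^ j"
  define N where "N = card Z"
  obtain e where e: "bij_betw e {0..<N} Z" using ex_bij_betw_nat_finite[OF assms] N_def by blast
  define \<iota> where "\<iota> = the_inv_into {0..<N} e"
  define L where "L = N div K * K"
  have "K > 0" "L \<le> N" by (simp_all add: K_def L_def div_times_less_eq_dividend)
  have \<iota>: "\<And>c. c \<in> Z \<Longrightarrow> \<iota> c < N \<and> e (\<iota> c) = c"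
    using e unfolding \<iota>_def bij_betw_def
    by (metis atLeastLessThan_iff f_the_inv_into_f the_inv_into_into zero_le subset_refl)
  have \<iota>_e: "\<And>i. i < N \<Longrightarrow> \<iota> (e i) = i"
    using e unfolding \<iota>_def bij_betw_def by (simp add: the_inv_into_f_f)
  have e_inj: "\<And>i i'. i < N \<Longrightarrow> i' < N \<Longrightarrow> e i = e i' \<Longrightarrow> i = i'"
    using e unfolding bij_betw_def inj_on_def by auto
  define \<beta> where "\<beta> d i = i div K * K + (i mod K XOR d)" for d i
  define act where "act d c = (if c \<in> Z \<and> \<iota> c < L then e (\<beta> d (\<iota> c)) else c)" for d c
  define bad where "bad = e ` {L..<N}"
  have \<beta>: "\<beta> d i < L" "\<beta> d i div K = i div K" "\<beta> d i mod K = i mod K XOR d"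
    if "i < L" "d < K" for i d
    using block_index_bounds[of i N K "i mod K XOR d"] that \<open>K > 0\<close> xor_less_power2[of _ j d]
    unfolding \<beta>_def L_def K_def by auto
  have e_\<beta>: "e (\<beta> d i) \<in> Z \<and> \<iota> (e (\<beta> d i)) = \<beta> d i" if "i < L" "d < K" for i d
    using \<beta>[OF that] \<open>L \<le> N\<close> e \<iota>_e unfolding bij_betw_def by auto
  have "xor_action K Z act"
    unfolding xor_action_def
  proof (intro conjI allI impI ballI)
    fix d c assume "d < K" "c \<in> Z"
    then show "act d c \<in> Z" using e_\<beta> by (simp add: act_def)
  next
    fix c assume "c \<in> Z"
    then show "act 0 c = c" using \<iota> by (simp add: act_def \<beta>_def)
  next
    fix d d' c assume "d < K" "d' < K" "c \<in> Z"
    then show "act d (act d' c) = act (d XOR d') c"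
      using e_\<beta> \<beta> by (auto simp: act_def \<beta>_def xor.assoc xor.commute xor.left_commute)
  qed
  moreover have "\<forall>c\<in>Z - bad. \<forall>d<K. act d c = c \<longrightarrow> d = 0"
  proof (intro ballI allI impI)
    fix c d assume c: "c \<in> Z - bad" and "d < K" and fixed: "act d c = c"
    have "\<iota> c < L"
      using c \<iota>[of c] unfolding bad_def by (metis DiffE atLeastLessThan_iff image_eqI not_le)
    then have "e (\<beta> d (\<iota> c)) = e (\<iota> c)" using fixed c \<iota> by (simp add: act_def)
    then have "\<beta> d (\<iota> c) = \<iota> c" using e_inj \<beta>(1)[OF \<open>\<iota> c < L\<close> \<open>d < K\<close>] \<open>\<iota> c < L\<close> \<open>L \<le> N\<close> by simp
    then show "d = 0" using \<beta>(3)[OF \<open>\<iota> c < L\<close> \<open>d < K\<close>] xor_eq_left_iff by metis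
  qed
  moreover have "bad \<subseteq> Z" using e \<open>L \<le> N\<close> unfolding bad_def bij_betw_def by auto
  moreover have "card bad < K"
  proof -
    have "card bad = N - L" unfolding bad_def
      by (subst card_image) (use e in \<open>auto simp: bij_betw_def elim: inj_on_subset\<close>)
    also have "\<dots> = N mod K" by (simp add: L_def minus_div_mult_eq_mod)
    finally show ?thesis using \<open>K > 0\<close> by simp
  qed
  ultimately show ?thesis unfolding K_def by blast
qed

lemma xor_action_on_fibres:
  assumes "\<And>w. xor_action K {c\<in>Z. \<kappa> c = w} (A w)"
  shows "xor_action K Z (\<lambda>d c. A (\<kappa> c) d c)" "\<forall>d<K. \<forall>c\<in>Z. \<kappa> (A (\<kappa> c) d c) = \<kappa> c"
proof -
  have fibre: "A (\<kappa> c) d c \<in> Z \<and> \<kappa> (A (\<kappa> c) d c) = \<kappa> c" if "d < K" "c \<in> Z" for d c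
    using assms[of "\<kappa> c"] that unfolding xor_action_def by blast
  then show "\<forall>d<K. \<forall>c\<in>Z. \<kappa> (A (\<kappa> c) d c) = \<kappa> c" by simp
  show "xor_action K Z (\<lambda>d c. A (\<kappa> c) d c)"
    unfolding xor_action_def
  proof (intro conjI allI impI ballI)
    fix d c assume "d < K" "c \<in> Z"
    then show "A (\<kappa> c) d c \<in> Z" using fibre by simp
  next
    fix c assume "c \<in> Z"
    then show "A (\<kappa> c) 0 c = c" using assms[of "\<kappa> c"] by (simp add: xor_action_def)
  next
    fix d d' c assume "d < K" "d' < K" "c \<in> Z"
    then show "A (\<kappa> (A (\<kappa> c) d' c)) d (A (\<kappa> c) d' c) = A (\<kappa> c) (d XOR d') c"
      using assms[of "\<kappa> c"] fibre[of d' c] by (simp add: xor_action_def)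
  qed
qed

lemma ex_xor_action_on_fibres:
  assumes "finite Z"
  shows "\<exists>act bad. xor_action (2 ^ j) Z act \<and> (\<forall>d<2 ^ j. \<forall>c\<in>Z. \<kappa> (act d c) = \<kappa> c) \<and>
           (\<forall>c\<in>Z - bad. \<forall>d<2 ^ j. act d c = c \<longrightarrow> d = 0) \<and>
           bad \<subseteq> Z \<and> (\<forall>w. card {c\<in>bad. \<kappa> c = w} < 2 ^ j)"
proof -
  let ?F = "\<lambda>w. {c\<in>Z. \<kappa> c = w}"
  have "\<forall>w. \<exists>act bad. xor_action (2 ^ j) (?F w) act \<and>
          (\<forall>c\<in>?F w - bad. \<forall>d<2 ^ j. act d c = c \<longrightarrow> d = 0) \<and> bad \<subseteq> ?F w \<and> card bad < 2 ^ j"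
    by (intro allI ex_xor_action_free_off_small_set) (simp add: assms)
  from choice[OF this] obtain A where "\<forall>w. \<exists>bad. xor_action (2 ^ j) (?F w) (A w) \<and>
      (\<forall>c\<in>?F w - bad. \<forall>d<2 ^ j. A w d c = c \<longrightarrow> d = 0) \<and> bad \<subseteq> ?F w \<and> card bad < 2 ^ j"
    by blast
  from choice[OF this] obtain B where AB: "\<forall>w. xor_action (2 ^ j) (?F w) (A w) \<and>
      (\<forall>c\<in>?F w - B w. \<forall>d<2 ^ j. A w d c = c \<longrightarrow> d = 0) \<and> B w \<subseteq> ?F w \<and> card (B w) < 2 ^ j"
    by blast
  then have A: "\<And>w. xor_action (2 ^ j) (?F w) (A w)"
    and free: "\<And>w. \<forall>c\<in>?F w - B w. \<forall>d<2 ^ j. A w d c = c \<longrightarrow> d = 0"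
    and B: "\<And>w. B w \<subseteq> ?F w" "\<And>w. card (B w) < 2 ^ j"
    by blast+
  define act where "act d c = A (\<kappa> c) d c" for d c
  define bad where "bad = {c. c \<in> B (\<kappa> c)}"
  have "xor_action (2 ^ j) Z act" "\<forall>d<2 ^ j. \<forall>c\<in>Z. \<kappa> (act d c) = \<kappa> c"
    using xor_action_on_fibres[OF A] by (simp_all add: act_def[abs_def])
  moreover have "\<forall>c\<in>Z - bad. \<forall>d<2 ^ j. act d c = c \<longrightarrow> d = 0"
    using free unfolding act_def bad_def by blast
  moreover have "bad \<subseteq> Z"
    using B(1) by (auto simp: bad_def)
  moreover have "card {c\<in>bad. \<kappa> c = w} < 2 ^ j" for w
  proof -
    have "{c\<in>bad. \<kappa> c = w} \<subseteq> B w" by (auto simp: bad_def)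
    moreover have "finite (B w)" using finite_subset[OF B(1)[of w]] assms by simp
    ultimately show ?thesis using B(2)[of w] card_mono by (metis le_less_trans)
  qed
  ultimately show ?thesis by blast
qed

definition block_swap :: "nat \<Rightarrow> nat \<Rightarrow> nat \<Rightarrow> nat" where
  "block_swap b x i = (if i < b then i + x else if x \<le> i \<and> i < x + b then i - x else i)"

lemma block_swap_involution:
  assumes "x + b \<le> c" "x = 0 \<or> b \<le> x" "i < c"
  shows "block_swap b x i < c \<and> block_swap b x (block_swap b x i) = i"
  using assms unfolding block_swap_def
  by (cases "i < b"; cases "x \<le> i \<and> i < x + b"; simp; linarith)

lemma disjoint_blocks:
  fixes k k' b :: nat
  assumes "k \<noteq> k'"
  shows "{k * b..<k * b + b} \<inter> {k' * b..<k' * b + b} = {}"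
proof (cases "k < k'")
  case True
  then have "(k + 1) * b \<le> k' * b" by (intro mult_le_mono1) simp
  then show ?thesis by auto
next
  case False
  then have "(k' + 1) * b \<le> k * b" using assms by (intro mult_le_mono1) simp
  then show ?thesis by auto
qed

text \<open>The \<open>k\<close>-th involution swaps the first block of length \<open>card B\<close> of an enumeration
  listing \<open>B\<close> first with the \<open>k\<close>-th block.\<close>
lemma ex_involutions_disjoint_images:
  assumes "finite Z" "B \<subseteq> Z" "N * card B \<le> card Z"
  shows "\<exists>G. \<forall>k<N. (\<forall>z\<in>Z. G k z \<in> Z \<and> G k (G k z) = z) \<and>
            (\<forall>k'<N. k \<noteq> k' \<longrightarrow> G k ` B \<inter> G k' ` B = {})"
proof -
  define b where "b = card B"
  define c where "c = card Z"
  obtain e where e: "bij_betw e {0..<c} Z" "e ` {0..<b} = B"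
    using ex_enumeration_subset_first[OF assms(1,2)] b_def c_def by blast
  define \<iota> where "\<iota> = the_inv_into {0..<c} e"
  have \<iota>: "\<And>z. z \<in> Z \<Longrightarrow> \<iota> z < c \<and> e (\<iota> z) = z"
    using e(1) unfolding \<iota>_def bij_betw_def
    by (metis atLeastLessThan_iff f_the_inv_into_f the_inv_into_into zero_le subset_refl)
  have \<iota>_e: "\<And>i. i < c \<Longrightarrow> \<iota> (e i) = i"
    using e(1) unfolding \<iota>_def bij_betw_def by (simp add: the_inv_into_f_f)
  have block_le: "k * b + b \<le> c" if "k < N" for k
  proof -
    have "(k + 1) * b \<le> N * b" using that by (intro mult_le_mono1) simp
    then show ?thesis using assms(3) b_def c_def by simp
  qed
  have \<tau>: "block_swap b (k * b) i < c \<and> block_swap b (k * b) (block_swap b (k * b) i) = i"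
    if "k < N" "i < c" for k i
  proof (rule block_swap_involution)
    show "k * b = 0 \<or> b \<le> k * b" by (cases k) auto
  qed (use block_le[OF that(1)] that(2) in auto)
  define G where "G k z = e (block_swap b (k * b) (\<iota> z))" for k z
  have G_B: "G k ` B = e ` {k * b..<k * b + b}" if "k < N" for k
  proof -
    have "G k ` B = (\<lambda>i. e (i + k * b)) ` {0..<b}"
      unfolding e(2)[symmetric] image_image
      by (rule image_cong) (use \<iota>_e block_le[OF that] in \<open>auto simp: G_def block_swap_def\<close>)
    also have "\<dots> = e ` ((\<lambda>i. i + k * b) ` {0..<b})" by (rule image_image[symmetric])
    also have "(\<lambda>i. i + k * b) ` {0..<b} = {k * b..<k * b + b}" by (simp add: add.commute)
    finally show ?thesis .
  qed
  have "\<forall>k<N. (\<forall>z\<in>Z. G k z \<in> Z \<and> G k (G k z) = z) \<and>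
          (\<forall>k'<N. k \<noteq> k' \<longrightarrow> G k ` B \<inter> G k' ` B = {})"
  proof (intro allI impI conjI ballI)
    fix k z assume "k < N" "z \<in> Z"
    then show "G k z \<in> Z" "G k (G k z) = z"
      using \<tau> \<iota> \<iota>_e e(1) unfolding G_def bij_betw_def by auto
  next
    fix k k' assume k: "k < N" "k' < N" "k \<noteq> k'"
    have "{k * b..<k * b + b} \<inter> {k' * b..<k' * b + b} = {}" using k(3) by (rule disjoint_blocks)
    moreover have "{k * b..<k * b + b} \<subseteq> {0..<c}" "{k' * b..<k' * b + b} \<subseteq> {0..<c}"
      using block_le k by auto
    ultimately show "G k ` B \<inter> G k' ` B = {}"
      using inj_on_image_Int[of e "{0..<c}"] e(1) unfolding G_B[OF k(1)] G_B[OF k(2)] bij_betw_def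
      by (metis image_empty)
  qed
  then show ?thesis by blast
qed

lemma ex_involutions_disjoint_images_on_fibres:
  assumes "finite Z" "B \<subseteq> Z" "\<And>w. N * card {b\<in>B. \<kappa> b = w} \<le> card {z\<in>Z. \<kappa> z = w}"
  shows "\<exists>G. \<forall>k<N. (\<forall>z\<in>Z. G k z \<in> Z \<and> \<kappa> (G k z) = \<kappa> z \<and> G k (G k z) = z) \<and>
            (\<forall>k'<N. k \<noteq> k' \<longrightarrow> G k ` B \<inter> G k' ` B = {})"
proof -
  let ?F = "\<lambda>w. {z\<in>Z. \<kappa> z = w}" and ?B = "\<lambda>w. {b\<in>B. \<kappa> b = w}"
  have "\<forall>w. \<exists>H. \<forall>k<N. (\<forall>z\<in>?F w. H k z \<in> ?F w \<and> H k (H k z) = z) \<and>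
            (\<forall>k'<N. k \<noteq> k' \<longrightarrow> H k ` ?B w \<inter> H k' ` ?B w = {})"
    using assms by (intro allI ex_involutions_disjoint_images) auto
  from choice[OF this] obtain H where H:
    "\<And>w. \<forall>k<N. (\<forall>z\<in>?F w. H w k z \<in> ?F w \<and> H w k (H w k z) = z) \<and>
            (\<forall>k'<N. k \<noteq> k' \<longrightarrow> H w k ` ?B w \<inter> H w k' ` ?B w = {})"
    by blast
  define G where "G k z = H (\<kappa> z) k z" for k z
  have G: "G k z \<in> Z \<and> \<kappa> (G k z) = \<kappa> z \<and> G k (G k z) = z" if "k < N" "z \<in> Z" for k z
    using H[of "\<kappa> z"] that unfolding G_def by auto
  have "G k ` B \<inter> G k' ` B = {}" if k: "k < N" "k' < N" "k \<noteq> k'" for k k'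
  proof (rule ccontr)
    assume "G k ` B \<inter> G k' ` B \<noteq> {}"
    then obtain b b' where bb: "b \<in> B" "b' \<in> B" "G k b = G k' b'" by auto
    then have "\<kappa> b = \<kappa> b'" using G k assms(2) by (metis subsetD)
    have "H (\<kappa> b) k b \<in> H (\<kappa> b) k ` ?B (\<kappa> b)" using bb(1) by auto
    moreover have "H (\<kappa> b) k b = H (\<kappa> b) k' b'" using bb(3) \<open>\<kappa> b = \<kappa> b'\<close> by (simp add: G_def)
    then have "H (\<kappa> b) k b \<in> H (\<kappa> b) k' ` ?B (\<kappa> b)" using bb(2) \<open>\<kappa> b = \<kappa> b'\<close> by auto
    ultimately have "H (\<kappa> b) k b \<in> H (\<kappa> b) k ` ?B (\<kappa> b) \<inter> H (\<kappa> b) k' ` ?B (\<kappa> b)" by blast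
    then show False using H[of "\<kappa> b"] k by blast
  qed
  then show ?thesis using G by blast
qed

lemma inj_on_ex_3_colouring:
  assumes "finite T" "inj_on \<sigma> T"
  shows "\<exists>col::'a \<Rightarrow> nat. \<forall>p\<in>T. col p < 3 \<and> (\<sigma> p \<in> T \<and> \<sigma> p \<noteq> p \<longrightarrow> col (\<sigma> p) \<noteq> col p)"
  using assms
proof (induction T rule: finite_induct)
  case empty
  then show ?case by auto
next
  case (insert t T)
  then obtain col :: "'a \<Rightarrow> nat"
    where col: "\<forall>p\<in>T. col p < 3 \<and> (\<sigma> p \<in> T \<and> \<sigma> p \<noteq> p \<longrightarrow> col (\<sigma> p) \<noteq> col p)"
    by (meson inj_on_subset subset_insertI)
  define pre where "pre = {p\<in>T. \<sigma> p = t}"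
  have "finite pre" using insert.hyps(1) by (simp add: pre_def)
  have "card pre \<le> 1"
  proof -
    have "p = q" if "p \<in> pre" "q \<in> pre" for p q
      using that insert.prems by (auto simp: pre_def inj_on_eq_iff)
    then show ?thesis using card_le_Suc0_iff_eq[OF \<open>finite pre\<close>] by simp
  qed
  define forbidden where "forbidden = col ` insert (\<sigma> t) pre"
  have "card forbidden \<le> 2"
  proof -
    have "card forbidden \<le> card (insert (\<sigma> t) pre)"
      unfolding forbidden_def by (rule card_image_le) (simp add: \<open>finite pre\<close>)
    also have "\<dots> \<le> Suc (card pre)" by (simp add: card_insert_if \<open>finite pre\<close>)
    finally show ?thesis using \<open>card pre \<le> 1\<close> by simp
  qed
  have "\<not> {0::nat, 1, 2} \<subseteq> forbidden"
  proof
    assume "{0::nat, 1, 2} \<subseteq> forbidden"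
    then have "card {0::nat, 1, 2} \<le> card forbidden"
      by (rule card_mono[rotated]) (simp add: forbidden_def \<open>finite pre\<close>)
    then show False using \<open>card forbidden \<le> 2\<close> by simp
  qed
  then obtain c where "c \<in> {0::nat, 1, 2}" "c \<notin> forbidden" by blast
  then have c: "c < 3" "c \<notin> forbidden" by auto
  define col' where "col' = col(t := c)"
  have "\<forall>p\<in>insert t T. col' p < 3 \<and> (\<sigma> p \<in> insert t T \<and> \<sigma> p \<noteq> p \<longrightarrow> col' (\<sigma> p) \<noteq> col' p)"
    using col c insert.hyps(2) unfolding col'_def pre_def forbidden_def by auto
  then show ?case by blast
qed

text \<open>The three homomorphisms \<open>(\<int>/2)\<^sup>r \<rightarrow> (\<int>/2)\<^sup>2\<^sup>r\<close> indexed by a colour: zero and the two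
  coordinate embeddings. The sum of two different ones is injective.\<close>
definition colour_embedding :: "nat \<Rightarrow> nat \<Rightarrow> nat \<Rightarrow> nat" where
  "colour_embedding r c a = (if c = 0 then 0 else if c = 1 then a else a * 2 ^ r)"

lemma colour_embedding_xor:
  "colour_embedding r c a XOR colour_embedding r c b = colour_embedding r c (a XOR b)"
  by (simp add: colour_embedding_def push_bit_eq_mult[symmetric] push_bit_xor)

lemma colour_embedding_less:
  assumes "a < 2 ^ r"
  shows "colour_embedding r c a < 2 ^ (2 * r)"
proof -
  have "(2::nat) ^ r \<le> 2 ^ (2 * r)" by (intro power_increasing) auto
  with assms have "a < 2 ^ (2 * r)" by linarith
  moreover have "a * 2 ^ r < 2 ^ r * 2 ^ r" using assms by simp
  moreover have "(2::nat) ^ r * 2 ^ r = 2 ^ (2 * r)" by (simp add: power_add[symmetric] mult_2)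
  ultimately show ?thesis by (simp add: colour_embedding_def)
qed

lemma colour_embedding_xor_ne_0:
  assumes "a < 2 ^ r" "b < 2 ^ r" "a \<noteq> b" "c1 < 3" "c2 < 3" "c1 \<noteq> c2"
  shows "(colour_embedding r c1 a XOR colour_embedding r c1 b) XOR
         (colour_embedding r c2 a XOR colour_embedding r c2 b) \<noteq> 0"
proof -
  define d where "d = a XOR b"
  have "d \<noteq> 0" "d < 2 ^ r" using assms xor_eq_0_iff xor_less_power2 d_def by auto
  then have "r \<noteq> 0" by (cases r) auto
  then have "d * 2 \<le> d * 2 ^ r" using power_increasing[of 1 r "2::nat"] by simp
  then have "d \<noteq> d * 2 ^ r" using \<open>d \<noteq> 0\<close> by linarith
  then have "colour_embedding r c1 d \<noteq> colour_embedding r c2 d"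
    using assms(4-6) \<open>d \<noteq> 0\<close> \<open>r \<noteq> 0\<close> by (auto simp: colour_embedding_def)
  then show ?thesis unfolding colour_embedding_xor d_def[symmetric] xor_eq_0_iff .
qed

lemma even_cycles_if_involution:
  assumes "\<forall>x\<in>X. g (g x) = x"
  shows "even_cycles X g"
  unfolding even_cycles_def
proof (intro ballI conjI)
  fix x assume "x \<in> X"
  then have g2: "(g ^^ 2) x = x" using assms by (simp add: numeral_2_eq_2)
  then show "\<exists>p>0. (g ^^ p) x = x" by (intro exI[of _ 2]) simp
  have "period g x = (if g x = x then 1 else 2)"
    unfolding period_def
  proof (rule Least_equality)
    fix p :: nat assume "0 < p \<and> (g ^^ p) x = x"
    then show "(if g x = x then 1 else 2) \<le> p" by (cases "p = 1") auto
  qed (use g2 in auto)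
  then show "period g x = 1 \<or> even (period g x)" by simp
qed

lemma infinite_cantor_ternary: "infinite cantor_ternary"
proof -
  define t where "t k = 2 / (3::real) ^ Suc k" for k
  have "t k \<in> cantor_ternary" for k
  proof -
    define d where "d n = (if n = k then 2 else 0::nat)" for n
    have "(\<lambda>n. real (d n) / 3 ^ Suc n) = (\<lambda>n. if n = k then 2 / 3 ^ Suc n else 0)"
      by (auto simp: d_def fun_eq_iff)
    then have "(\<lambda>n. real (d n) / 3 ^ Suc n) sums t k"
      using sums_single[of k "\<lambda>n. 2 / (3::real) ^ Suc n"] by (simp add: t_def)
    moreover have "\<forall>n. d n \<in> {0, 2}" by (simp add: d_def)
    ultimately show ?thesis unfolding cantor_ternary_def by blast
  qed
  moreover have "inj t"
  proof
    fix a b assume "t a = t b"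
    then have "(3::real) ^ Suc a = 3 ^ Suc b" unfolding t_def by (simp add: divide_simps)
    then show "a = b" by (metis Suc_inject power_inject_exp one_less_numeral_iff semiring_norm(77))
  qed
  ultimately show ?thesis
    by (meson finite_subset image_subset_iff inj_on_finite subset_UNIV infinite_UNIV_nat)
qed

section \<open>Paths of a Bratteli diagram\<close>

definition path_prefix :: "nat \<Rightarrow> (nat \<Rightarrow> 'e) \<Rightarrow> 'e list" where
  "path_prefix m x = map x [0..<m]"

lemma length_path_prefix [simp]: "length (path_prefix m x) = m"
  by (simp add: path_prefix_def)

lemma nth_path_prefix [simp]: "k < m \<Longrightarrow> path_prefix m x ! k = x k"
  by (simp add: path_prefix_def)

lemma path_prefix_Suc: "path_prefix (Suc m) x = path_prefix m x @ [x m]"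
  by (simp add: path_prefix_def)

lemma take_path_prefix: "n \<le> m \<Longrightarrow> take n (path_prefix m x) = path_prefix n x"
  by (simp add: path_prefix_def take_map)

lemma drop_path_prefix: "drop n (path_prefix m x) = map x [n..<m]"
  by (simp add: path_prefix_def drop_map)

lemma path_prefix_eq_iff: "path_prefix m x = path_prefix m y \<longleftrightarrow> (\<forall>k<m. x k = y k)"
  by (auto simp: path_prefix_def)

lemma last_path_prefix: "0 < m \<Longrightarrow> last (path_prefix m x) = x (m - 1)"
  by (simp add: path_prefix_def last_map)

definition graft :: "nat \<Rightarrow> (nat \<Rightarrow> 'e) \<Rightarrow> (nat \<Rightarrow> 'e) \<Rightarrow> nat \<Rightarrow> 'e" where
  "graft k x z = (\<lambda>i. if i < k then x i else z i)"

lemma path_prefix_graft: "path_prefix k (graft k x z) = path_prefix k x"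
  by (simp add: path_prefix_eq_iff graft_def)

lemma openin_product_discrete_cylinder:
  fixes m :: nat and f :: "nat \<Rightarrow> 'a"
  shows "openin (product_topology (\<lambda>_. discrete_topology UNIV) UNIV) {x. \<forall>k<m. x k = f k}"
proof (induction m)
  case 0
  have "{x. \<forall>k<0::nat. x k = f k} = topspace (product_topology (\<lambda>_. discrete_topology UNIV) UNIV)"
    by (simp add: topspace_product_topology)
  then show ?case by (metis openin_topspace)
next
  case (Suc m)
  have "openin (product_topology (\<lambda>_. discrete_topology UNIV) UNIV) {x. x m = f m}"
    using openin_continuous_map_preimage[OF continuous_map_product_projection, of m UNIV
        "\<lambda>_. discrete_topology UNIV" "{f m}"]
    by (simp add: topspace_product_topology)
  moreover have "{x. \<forall>k<Suc m. x k = f k} = {x. \<forall>k<m. x k = f k} \<inter> {x. x m = f m}"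
    by (auto simp: less_Suc_eq)
  ultimately show ?case using Suc by (simp add: openin_Int)
qed

lemma closedin_product_discrete_coordinate:
  "closedin (product_topology (\<lambda>_. discrete_topology UNIV) UNIV) {x. x k \<in> A}"
  using closedin_continuous_map_preimage[OF continuous_map_product_projection, of k UNIV
      "\<lambda>_. discrete_topology UNIV" A]
  by (simp add: topspace_product_topology)

locale bratteli_diagram =
  fixes V :: "nat \<Rightarrow> 'v set" and E :: "nat \<Rightarrow> 'e set" and src rng :: "'e \<Rightarrow> 'v" and v0 :: 'v
  assumes bratteli: "bratteli V E src rng v0"
begin

abbreviation X where "X \<equiv> path_space E src rng v0"

definition end_vertex :: "'e list \<Rightarrow> 'v" where
  "end_vertex l = (if l = [] then v0 else rng (last l))"

definition prefixes :: "nat \<Rightarrow> 'e list set" where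
  "prefixes m = path_prefix m ` X"

lemma path_spaceD:
  assumes "x \<in> X"
  shows "x k \<in> E (Suc k)" "src (x 0) = v0" "rng (x k) = src (x (Suc k))"
  using assms unfolding path_space_def by auto

lemma end_vertex_path_prefix:
  assumes "x \<in> X"
  shows "end_vertex (path_prefix m x) = src (x m)"
proof (cases m)
  case 0
  then show ?thesis using path_spaceD[OF assms] by (simp add: end_vertex_def path_prefix_def)
next
  case (Suc k)
  then have "path_prefix m x \<noteq> []" by (metis length_path_prefix list.size(3) nat.distinct(1))
  then show ?thesis
    using Suc path_spaceD(3)[OF assms, of k] last_path_prefix[of m x] by (simp add: end_vertex_def)
qed

lemma graft_in_path_space:
  assumes "x \<in> X" "z \<in> X" "src (x k) = src (z k)"
  shows "graft k x z \<in> X"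
proof -
  have "rng (graft k x z i) = src (graft k x z (Suc i))" for i
  proof -
    consider "Suc i < k" | "Suc i = k" | "k \<le> i" by linarith
    then show ?thesis
      using path_spaceD(3)[OF assms(1), of i] path_spaceD(3)[OF assms(2), of i] assms(3)
      by cases (auto simp: graft_def)
  qed
  then show ?thesis
    using path_spaceD(1,2)[OF assms(1)] path_spaceD(1,2)[OF assms(2)]
    unfolding path_space_def by (auto simp: graft_def)
qed

lemma length_prefixes: "l \<in> prefixes m \<Longrightarrow> length l = m"
  unfolding prefixes_def by auto

lemma finite_prefixes: "finite (prefixes m)"
proof -
  have "finite (\<Union>k<m. E (Suc k))" using bratteli unfolding bratteli_def by auto
  moreover have "prefixes m \<subseteq> {l. set l \<subseteq> (\<Union>k<m. E (Suc k)) \<and> length l = m}"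
    unfolding prefixes_def path_prefix_def using path_spaceD(1) by fastforce
  ultimately show ?thesis using finite_lists_length_eq finite_subset by blast
qed

lemma topspace_cyl_top [simp]: "topspace (cyl_top X) = X"
  unfolding cyl_top_def by (simp add: topspace_product_topology)

lemma openin_cyl_top_prefix: "openin (cyl_top X) {x \<in> X. path_prefix m x \<in> B}"
proof -
  let ?P = "product_topology (\<lambda>_. discrete_topology (UNIV::'e set)) (UNIV::nat set)"
  define T where "T = (\<Union>l\<in>B \<inter> {l. length l = m}. {x::nat\<Rightarrow>'e. \<forall>k<m. x k = l ! k})"
  have "openin ?P T"
    unfolding T_def by (intro openin_Union) (auto intro: openin_product_discrete_cylinder)
  moreover have "{x \<in> X. path_prefix m x \<in> B} = T \<inter> X"
  proof (intro equalityI subsetI)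
    fix x assume "x \<in> {x \<in> X. path_prefix m x \<in> B}"
    then show "x \<in> T \<inter> X" unfolding T_def by (auto intro!: bexI[of _ "path_prefix m x"])
  next
    fix x assume "x \<in> T \<inter> X"
    then obtain l where "l \<in> B" "length l = m" "\<forall>k<m. x k = l ! k" "x \<in> X" unfolding T_def by auto
    moreover from this have "path_prefix m x = l" by (simp add: list_eq_iff_nth_eq)
    ultimately show "x \<in> {x \<in> X. path_prefix m x \<in> B}" by simp
  qed
  ultimately show ?thesis unfolding cyl_top_def openin_subtopology by blast
qed

lemma closedin_path_space:
  "closedin (product_topology (\<lambda>_. discrete_topology UNIV) UNIV) X"
proof -
  let ?P = "product_topology (\<lambda>_. discrete_topology (UNIV::'e set)) (UNIV::nat set)"
  have "closedin ?P (\<Inter>k. {x. x k \<in> E (Suc k)})"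
    by (intro closedin_INT closedin_product_discrete_coordinate) auto
  moreover have "closedin ?P {x. x 0 \<in> src -` {v0}}"
    by (rule closedin_product_discrete_coordinate)
  moreover have "closedin ?P (\<Inter>k. \<Inter>e. {x. x k \<in> - {e}} \<union> {x. x (Suc k) \<in> src -` {rng e}})"
    by (intro closedin_INT closedin_Un closedin_product_discrete_coordinate) auto
  moreover have "X = (\<Inter>k. {x. x k \<in> E (Suc k)}) \<inter> {x. x 0 \<in> src -` {v0}} \<inter>
     (\<Inter>k. \<Inter>e. {x. x k \<in> - {e}} \<union> {x. x (Suc k) \<in> src -` {rng e}})"
    unfolding path_space_def by auto
  ultimately show ?thesis by (simp add: closedin_Int)
qed

lemma compactin_path_space: "compactin (cyl_top X) X"
proof -
  let ?P = "product_topology (\<lambda>_. discrete_topology (UNIV::'e set)) (UNIV::nat set)"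
  have "compactin ?P (PiE UNIV (\<lambda>k. E (Suc k)))"
    unfolding compactin_PiE using bratteli unfolding bratteli_def by (auto intro: finite_imp_compactin)
  moreover have "X \<subseteq> PiE UNIV (\<lambda>k. E (Suc k))" using path_spaceD(1) by auto
  ultimately have "compactin ?P X" using closed_compactin closedin_path_space by blast
  then show ?thesis unfolding cyl_top_def by (simp add: compactin_subtopology)
qed

lemma t1_space_cyl_top: "t1_space (cyl_top X)"
  unfolding cyl_top_def
  by (intro Hausdorff_imp_t1_space Hausdorff_space_subtopology)
     (simp add: Hausdorff_space_product_topology Hausdorff_space_discrete_topology)

lemma infinite_path_space:
  assumes "is_cantor_space (cyl_top X)"
  shows "infinite X"
proof
  assume "finite X"
  obtain f g where fg: "homeomorphic_maps (cyl_top X) (subtopology euclideanreal cantor_ternary) f g"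
    using assms unfolding is_cantor_space_def homeomorphic_space_def by blast
  then have "inj_on g cantor_ternary" "g ` cantor_ternary \<subseteq> X"
    unfolding homeomorphic_maps_def
    by (metis inj_on_inverseI topspace_subtopology_subset subset_UNIV topspace_euclidean,
        metis continuous_map_image_subset_topspace topspace_cyl_top
          topspace_subtopology_subset subset_UNIV topspace_euclidean)
  then have "finite cantor_ternary" using \<open>finite X\<close> by (meson finite_subset inj_on_finite)
  then show False using infinite_cantor_ternary by simp
qed

definition prefix_map :: "nat \<Rightarrow> ('e list \<Rightarrow> 'e list) \<Rightarrow> (nat \<Rightarrow> 'e) \<Rightarrow> nat \<Rightarrow> 'e" where
  "prefix_map m F x =
     (if x \<in> X then (\<lambda>k. if k < m then F (path_prefix m x) ! k else x k) else x)"

definition end_preserving :: "nat \<Rightarrow> ('e list \<Rightarrow> 'e list) \<Rightarrow> bool" where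
  "end_preserving m F \<longleftrightarrow> (\<forall>l\<in>prefixes m. F l \<in> prefixes m \<and> end_vertex (F l) = end_vertex l)"

definition inverse_prefix_perms :: "nat \<Rightarrow> ('e list \<Rightarrow> 'e list) \<Rightarrow> ('e list \<Rightarrow> 'e list) \<Rightarrow> bool" where
  "inverse_prefix_perms m F G \<longleftrightarrow> end_preserving m F \<and> end_preserving m G \<and>
     (\<forall>l\<in>prefixes m. F (G l) = l) \<and> (\<forall>l\<in>prefixes m. G (F l) = l)"

lemma end_preserving_comp: "end_preserving m F \<Longrightarrow> end_preserving m G \<Longrightarrow> end_preserving m (F \<circ> G)"
  unfolding end_preserving_def by auto

lemma inverse_prefix_perms_comp:
  "inverse_prefix_perms m F F' \<Longrightarrow> inverse_prefix_perms m G G' \<Longrightarrow>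
     inverse_prefix_perms m (F \<circ> G) (G' \<circ> F')"
  unfolding inverse_prefix_perms_def end_preserving_def by auto

lemma prefix_map_eq_graft:
  assumes "end_preserving m F" "x \<in> X"
  obtains y where "y \<in> X" "F (path_prefix m x) = path_prefix m y"
    "prefix_map m F x = graft m y x" "graft m y x \<in> X"
proof -
  have "F (path_prefix m x) \<in> prefixes m"
    "end_vertex (F (path_prefix m x)) = end_vertex (path_prefix m x)"
    using assms unfolding end_preserving_def prefixes_def by auto
  then obtain y where y: "y \<in> X" "F (path_prefix m x) = path_prefix m y"
    unfolding prefixes_def by auto
  moreover have "src (y m) = src (x m)"
    using y end_vertex_path_prefix assms(2) \<open>end_vertex _ = _\<close> by metis
  moreover have "prefix_map m F x = graft m y x"
    using assms(2) y(2) by (auto simp: prefix_map_def graft_def fun_eq_iff)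
  ultimately show thesis using that graft_in_path_space assms(2) by blast
qed

lemma prefix_map_in_path_space: "end_preserving m F \<Longrightarrow> x \<in> X \<Longrightarrow> prefix_map m F x \<in> X"
  by (metis prefix_map_eq_graft)

lemma path_prefix_prefix_map:
  "end_preserving m F \<Longrightarrow> x \<in> X \<Longrightarrow> path_prefix m (prefix_map m F x) = F (path_prefix m x)"
  by (metis prefix_map_eq_graft path_prefix_graft)

lemma prefix_map_beyond: "m \<le> k \<Longrightarrow> prefix_map m F x k = x k"
  by (simp add: prefix_map_def)

lemma prefix_map_outside: "x \<notin> X \<Longrightarrow> prefix_map m F x = x"
  by (simp add: prefix_map_def)

lemma prefix_map_comp:
  assumes "end_preserving m G"
  shows "prefix_map m F \<circ> prefix_map m G = prefix_map m (F \<circ> G)"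
proof
  fix x show "(prefix_map m F \<circ> prefix_map m G) x = prefix_map m (F \<circ> G) x"
  proof (cases "x \<in> X")
    case True
    then show ?thesis
      using prefix_map_in_path_space[OF assms True] path_prefix_prefix_map[OF assms True]
      by (auto simp: fun_eq_iff prefix_map_def[of m F] prefix_map_def[of m "F \<circ> G"]
          prefix_map_beyond not_less)
  qed (simp add: prefix_map_def)
qed

lemma prefix_map_eq_id:
  assumes "\<forall>l\<in>prefixes m. F l = l"
  shows "prefix_map m F = id"
proof
  fix x show "prefix_map m F x = id x"
    using assms by (cases "x \<in> X") (auto simp: prefix_map_def prefixes_def fun_eq_iff)
qed

lemma prefix_map_inverses:
  assumes "inverse_prefix_perms m F G"
  shows "prefix_map m F \<circ> prefix_map m G = id" "prefix_map m G \<circ> prefix_map m F = id"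
  using assms prefix_map_comp prefix_map_eq_id unfolding inverse_prefix_perms_def
  by (metis comp_apply)+

lemma inv_prefix_map: "inverse_prefix_perms m F G \<Longrightarrow> inv (prefix_map m F) = prefix_map m G"
  using prefix_map_inverses by (rule inv_unique_comp)

lemma prefix_map_fixed_iff:
  assumes "end_preserving m F" "x \<in> X"
  shows "prefix_map m F x = x \<longleftrightarrow> F (path_prefix m x) = path_prefix m x"
proof
  assume "prefix_map m F x = x"
  then show "F (path_prefix m x) = path_prefix m x" using path_prefix_prefix_map[OF assms] by simp
next
  assume "F (path_prefix m x) = path_prefix m x"
  then show "prefix_map m F x = x" using assms(2) by (auto simp: prefix_map_def fun_eq_iff)
qed

lemma supp_prefix_map:
  "end_preserving m F \<Longrightarrow> supp X (prefix_map m F) = {x \<in> X. F (path_prefix m x) \<noteq> path_prefix m x}"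
  unfolding supp_def using prefix_map_fixed_iff by auto

lemma continuous_map_prefix_map:
  assumes "end_preserving m F"
  shows "continuous_map (cyl_top X) (cyl_top X) (prefix_map m F)"
proof -
  have "continuous_map (cyl_top X) (discrete_topology UNIV) (\<lambda>x. prefix_map m F x k)" for k
  proof -
    define M where "M = max m (Suc k)"
    define C where "C U = {l. (if k < m then F (take m l) ! k else l ! k) \<in> U}" for U
    have "prefix_map m F x k = (if k < m then F (take m (path_prefix M x)) ! k else path_prefix M x ! k)"
      if "x \<in> X" for x
      using that unfolding prefix_map_def M_def by (simp add: take_path_prefix)
    then have "{x \<in> topspace (cyl_top X). prefix_map m F x k \<in> U} = {x \<in> X. path_prefix M x \<in> C U}"
      for U
      unfolding C_def by auto
    then show ?thesis unfolding continuous_map_def using openin_cyl_top_prefix by simp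
  qed
  then have "continuous_map (cyl_top X) (product_topology (\<lambda>_. discrete_topology UNIV) UNIV)
      (prefix_map m F)"
    by (simp add: continuous_map_componentwise_UNIV)
  then show ?thesis
    using prefix_map_in_path_space[OF assms]
    unfolding cyl_top_def[of X] by (auto simp: continuous_map_in_subtopology)
qed

lemma prefix_map_in_full_group_n:
  assumes "inverse_prefix_perms m F G"
  shows "prefix_map m F \<in> full_group_n X m"
proof -
  have "homeomorphic_maps (cyl_top X) (cyl_top X) (prefix_map m F) (prefix_map m G)"
    using assms continuous_map_prefix_map prefix_map_inverses[OF assms]
    unfolding homeomorphic_maps_def inverse_prefix_perms_def by (metis comp_apply id_apply)
  then have "homeomorphic_map (cyl_top X) (cyl_top X) (prefix_map m F)"
    using homeomorphic_map_maps by blast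
  moreover have "\<forall>x\<in>X. \<forall>y\<in>X. (\<forall>k<m. x k = y k) \<longrightarrow> (\<forall>k<m. prefix_map m F x k = prefix_map m F y k)"
    by (auto simp: prefix_map_def path_prefix_eq_iff[symmetric])
  ultimately show ?thesis
    unfolding full_group_n_def using prefix_map_beyond prefix_map_outside by blast
qed

lemma prefix_map_in_full_group: "inverse_prefix_perms m F G \<Longrightarrow> prefix_map m F \<in> full_group X"
  using prefix_map_in_full_group_n unfolding full_group_def by blast

lemma
  assumes "g \<in> full_group_n X n"
  shows full_group_n_homeomorphic: "homeomorphic_map (cyl_top X) (cyl_top X) g"
    and full_group_n_outside: "x \<notin> X \<Longrightarrow> g x = x"
    and full_group_n_beyond: "x \<in> X \<Longrightarrow> n \<le> k \<Longrightarrow> g x k = x k"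
    and full_group_n_prefix_determined:
      "x \<in> X \<Longrightarrow> y \<in> X \<Longrightarrow> \<forall>k<n. x k = y k \<Longrightarrow> k < n \<Longrightarrow> g x k = g y k"
proof -
  have "homeomorphic_map (cyl_top X) (cyl_top X) g \<and> (\<forall>x. x \<notin> X \<longrightarrow> g x = x) \<and>
     (\<forall>x\<in>X. \<forall>k\<ge>n. g x k = x k) \<and>
     (\<forall>x\<in>X. \<forall>y\<in>X. (\<forall>k<n. x k = y k) \<longrightarrow> (\<forall>k<n. g x k = g y k))"
    using assms unfolding full_group_n_def by (rule CollectD)
  note g = this
  show "homeomorphic_map (cyl_top X) (cyl_top X) g" by (rule g[THEN conjunct1])
  show "x \<notin> X \<Longrightarrow> g x = x" using g[THEN conjunct2, THEN conjunct1] by blast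
  show "x \<in> X \<Longrightarrow> n \<le> k \<Longrightarrow> g x k = x k"
    using g[THEN conjunct2, THEN conjunct2, THEN conjunct1] by blast
  show "x \<in> X \<Longrightarrow> y \<in> X \<Longrightarrow> \<forall>k<n. x k = y k \<Longrightarrow> k < n \<Longrightarrow> g x k = g y k"
    using g[THEN conjunct2, THEN conjunct2, THEN conjunct2] by blast
qed

lemma full_group_n_surj: "g \<in> full_group_n X n \<Longrightarrow> g ` X = X"
  by (metis full_group_n_homeomorphic homeomorphic_imp_surjective_map topspace_cyl_top)

lemma full_group_n_mono:
  assumes "g \<in> full_group_n X n" "n \<le> m"
  shows "g \<in> full_group_n X m"
proof -
  have "\<forall>x\<in>X. \<forall>y\<in>X. (\<forall>k<m. x k = y k) \<longrightarrow> (\<forall>k<m. g x k = g y k)"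
  proof (intro ballI impI allI)
    fix x y k assume xy: "x \<in> X" "y \<in> X" "\<forall>k<m. x k = y k" and "k < m"
    show "g x k = g y k"
    proof (cases "k < n")
      case True
      have "\<forall>k<n. x k = y k" using xy(3) assms(2) by simp
      then show ?thesis using full_group_n_prefix_determined[OF assms(1) xy(1,2)] True by blast
    next
      case False
      then show ?thesis using xy \<open>k < m\<close> full_group_n_beyond[OF assms(1)] by simp
    qed
  qed
  moreover have "homeomorphic_map (cyl_top X) (cyl_top X) g" "\<forall>x. x \<notin> X \<longrightarrow> g x = x"
    using full_group_n_homeomorphic[OF assms(1)] full_group_n_outside[OF assms(1)] by simp_all
  moreover have "\<forall>x\<in>X. \<forall>k\<ge>m. g x k = x k" using full_group_n_beyond[OF assms(1)] assms(2) by simp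
  ultimately show ?thesis unfolding full_group_n_def by (intro CollectI conjI)
qed

lemma full_group_n_in_path_space: "g \<in> full_group_n X n \<Longrightarrow> x \<in> X \<Longrightarrow> g x \<in> X"
  using full_group_n_surj by blast

definition prefix_action :: "nat \<Rightarrow> ((nat \<Rightarrow> 'e) \<Rightarrow> nat \<Rightarrow> 'e) \<Rightarrow> 'e list \<Rightarrow> 'e list" where
  "prefix_action m s l = path_prefix m (s (SOME y. y \<in> X \<and> path_prefix m y = l))"

lemma prefix_action_path_prefix:
  assumes "s \<in> full_group_n X m" "x \<in> X"
  shows "prefix_action m s (path_prefix m x) = path_prefix m (s x)"
proof -
  define y where "y = (SOME y. y \<in> X \<and> path_prefix m y = path_prefix m x)"
  have "y \<in> X \<and> path_prefix m y = path_prefix m x"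
    unfolding y_def by (rule someI[of _ x]) (use assms in simp)
  then have "path_prefix m (s y) = path_prefix m (s x)"
    using full_group_n_prefix_determined[OF assms(1) _ assms(2)] by (simp add: path_prefix_eq_iff)
  then show ?thesis by (simp add: prefix_action_def y_def)
qed

lemma end_preserving_prefix_action:
  assumes "s \<in> full_group_n X m"
  shows "end_preserving m (prefix_action m s)"
  unfolding end_preserving_def
proof
  fix l assume "l \<in> prefixes m"
  then obtain x where x: "x \<in> X" "l = path_prefix m x" unfolding prefixes_def by auto
  have "s x \<in> X" "s x m = x m"
    using full_group_n_in_path_space[OF assms x(1)] full_group_n_beyond[OF assms x(1)] by auto
  then show "prefix_action m s l \<in> prefixes m \<and> end_vertex (prefix_action m s l) = end_vertex l"
    using x prefix_action_path_prefix[OF assms x(1)] end_vertex_path_prefix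
    unfolding prefixes_def by auto
qed

lemma prefix_map_prefix_action:
  assumes "s \<in> full_group_n X m"
  shows "prefix_map m (prefix_action m s) = s"
proof
  fix x show "prefix_map m (prefix_action m s) x = s x"
  proof (cases "x \<in> X")
    case True
    then show ?thesis
      using prefix_action_path_prefix[OF assms True] full_group_n_beyond[OF assms True]
      by (auto simp: prefix_map_def fun_eq_iff not_less)
  qed (simp add: prefix_map_def full_group_n_outside[OF assms])
qed

lemma bij_betw_prefix_action:
  assumes "s \<in> full_group_n X m"
  shows "bij_betw (prefix_action m s) (prefixes m) (prefixes m)"
proof -
  have "prefix_action m s ` prefixes m = (\<lambda>x. path_prefix m (s x)) ` X"
    unfolding prefixes_def image_image
    by (rule image_cong) (simp_all add: prefix_action_path_prefix[OF assms])
  also have "\<dots> = path_prefix m ` (s ` X)" by (simp add: image_image)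
  finally have "prefix_action m s ` prefixes m = prefixes m"
    using full_group_n_surj[OF assms] by (simp add: prefixes_def)
  then show ?thesis
    unfolding bij_betw_def by (intro conjI eq_card_imp_inj_on) (simp_all add: finite_prefixes)
qed

lemma inverse_prefix_perms_prefix_action:
  assumes "s \<in> full_group_n X m"
  shows "inverse_prefix_perms m (prefix_action m s) (the_inv_into (prefixes m) (prefix_action m s))"
proof -
  let ?\<sigma> = "prefix_action m s" and ?\<sigma>' = "the_inv_into (prefixes m) (prefix_action m s)"
  note bij = bij_betw_prefix_action[OF assms]
  have inv_in: "?\<sigma>' l \<in> prefixes m" if "l \<in> prefixes m" for l
    using bij that by (metis bij_betw_def the_inv_into_into subset_refl)
  have right_inv: "?\<sigma> (?\<sigma>' l) = l" if "l \<in> prefixes m" for l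
    using bij that by (simp add: bij_betw_def f_the_inv_into_f)
  have left_inv: "?\<sigma>' (?\<sigma> l) = l" if "l \<in> prefixes m" for l
    using bij that by (simp add: bij_betw_def the_inv_into_f_f)
  have "end_vertex (?\<sigma>' l) = end_vertex l" if "l \<in> prefixes m" for l
    using end_preserving_prefix_action[OF assms] inv_in[OF that] right_inv[OF that]
    unfolding end_preserving_def by metis
  then have "end_preserving m ?\<sigma>'" using inv_in unfolding end_preserving_def by blast
  then show ?thesis
    using end_preserving_prefix_action[OF assms] left_inv right_inv
    unfolding inverse_prefix_perms_def by blast
qed

lemma prefix_action_append:
  assumes "s \<in> full_group_n X n" "n \<le> m" "x \<in> X"
  shows "prefix_action m s (path_prefix m x) = prefix_action n s (path_prefix n x) @ drop n (path_prefix m x)"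
proof -
  have "prefix_action m s (path_prefix m x) = take n (path_prefix m (s x)) @ drop n (path_prefix m (s x))"
    using prefix_action_path_prefix[OF full_group_n_mono[OF assms(1,2)] assms(3)] by simp
  also have "take n (path_prefix m (s x)) = prefix_action n s (path_prefix n x)"
    using take_path_prefix[OF assms(2)] prefix_action_path_prefix[OF assms(1,3)] by simp
  also have "drop n (path_prefix m (s x)) = drop n (path_prefix m x)"
    using full_group_n_beyond[OF assms(1,3)] unfolding drop_path_prefix by simp
  finally show ?thesis .
qed

definition prefix_class :: "nat \<Rightarrow> (nat \<Rightarrow> 'e) \<Rightarrow> 'e list set" where
  "prefix_class m x = {l \<in> prefixes m. end_vertex l = end_vertex (path_prefix m x)}"

lemma card_prefix_class_Suc:
  assumes "x \<in> X"
  shows "card (prefix_class m x) \<le> card (prefix_class (Suc m) x)"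
proof (rule card_inj_on_le)
  show "inj_on (\<lambda>l. l @ [x m]) (prefix_class m x)" by (simp add: inj_on_def)
  show "finite (prefix_class (Suc m) x)" unfolding prefix_class_def using finite_prefixes by simp
  show "(\<lambda>l. l @ [x m]) ` prefix_class m x \<subseteq> prefix_class (Suc m) x"
  proof (rule image_subsetI)
    fix l assume l: "l \<in> prefix_class m x"
    then obtain y where y: "y \<in> X" "l = path_prefix m y" unfolding prefix_class_def prefixes_def by auto
    have "src (y m) = src (x m)" using l y end_vertex_path_prefix assms unfolding prefix_class_def by auto
    then have graft: "graft m y x \<in> X" using graft_in_path_space y(1) assms by blast
    have prefix: "path_prefix (Suc m) (graft m y x) = l @ [x m]"
      using y(2) by (simp add: path_prefix_Suc path_prefix_graft) (simp add: graft_def)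
    have "end_vertex (l @ [x m]) = end_vertex (path_prefix (Suc m) x)"
      using end_vertex_path_prefix[OF graft, of "Suc m"] end_vertex_path_prefix[OF assms, of "Suc m"]
        prefix by (simp add: graft_def)
    moreover have "l @ [x m] \<in> prefixes (Suc m)"
      unfolding prefixes_def
      using image_eqI[of _ "path_prefix (Suc m)", OF prefix[symmetric] graft] .
    ultimately show "l @ [x m] \<in> prefix_class (Suc m) x" unfolding prefix_class_def by blast
  qed
qed

lemma card_prefix_class_mono:
  assumes "x \<in> X" "m \<le> m'"
  shows "card (prefix_class m x) \<le> card (prefix_class m' x)"
  using assms(2) by (induction m' rule: dec_induct) (auto intro: le_trans card_prefix_class_Suc[OF assms(1)])

lemma orbit_subset_path_space: "x \<in> X \<Longrightarrow> {g x | g. g \<in> full_group X} \<subseteq> X"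
  unfolding full_group_def using full_group_n_in_path_space by blast

text \<open>Finitely many points of the orbit of \<open>x\<close> agree with \<open>x\<close> beyond some level \<open>m\<close>, so
  their prefixes of length \<open>m\<close> are distinct and end where that of \<open>x\<close> ends.\<close>
lemma card_orbit_subset_le_prefix_class:
  assumes "x \<in> X" "finite F" "F \<subseteq> {g x | g. g \<in> full_group X}"
  shows "\<exists>m. card F \<le> card (prefix_class m x)"
proof -
  have "\<forall>y\<in>F. \<exists>n. \<exists>g\<in>full_group_n X n. y = g x"
    using assms(3) unfolding full_group_def by blast
  from bchoice[OF this] obtain level where level: "\<forall>y\<in>F. \<exists>g\<in>full_group_n X (level y). y = g x"
    by blast
  define m where "m = Max (insert 0 (level ` F))"
  have tail: "y k = x k" if y: "y \<in> F" "m \<le> k" for y k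
  proof -
    obtain g where g: "g \<in> full_group_n X (level y)" "y = g x"
      using bspec[OF level y(1)] by (rule bexE)
    have "level y \<le> m" unfolding m_def using assms(2) y(1) by (intro Max_ge) auto
    then show ?thesis using full_group_n_beyond[OF g(1) assms(1)] g(2) y(2) by simp
  qed
  have "card F \<le> card (prefix_class m x)"
  proof (rule card_inj_on_le)
    show "inj_on (path_prefix m) F"
    proof (rule inj_onI)
      fix y z assume "y \<in> F" "z \<in> F" "path_prefix m y = path_prefix m z"
      then show "y = z" using tail path_prefix_eq_iff by (metis not_le ext)
    qed
    show "finite (prefix_class m x)" unfolding prefix_class_def using finite_prefixes by simp
    show "path_prefix m ` F \<subseteq> prefix_class m x"
    proof (rule image_subsetI)
      fix y assume "y \<in> F"
      then have "y \<in> X" using assms(3) orbit_subset_path_space[OF assms(1)] by auto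
      then show "path_prefix m y \<in> prefix_class m x"
        using end_vertex_path_prefix assms(1) tail[OF \<open>y \<in> F\<close>]
        unfolding prefix_class_def prefixes_def by auto
    qed
  qed
  then show ?thesis by blast
qed

text \<open>Otherwise the orbit of \<open>x\<close> would be finite, hence closed, contradicting minimality.\<close>
lemma card_prefix_class_unbounded:
  assumes "minimal_action X" "infinite X" "x \<in> X"
  shows "\<exists>m. M \<le> card (prefix_class m x)"
proof (rule ccontr)
  assume small: "\<not> ?thesis"
  define orbit where "orbit = {g x | g. g \<in> full_group X}"
  have "finite orbit"
  proof (rule ccontr)
    assume "infinite orbit"
    then obtain F where "finite F" "card F = M" "F \<subseteq> orbit"
      using infinite_arbitrarily_large by blast
    then obtain m where "M \<le> card (prefix_class m x)"
      using card_orbit_subset_le_prefix_class[OF assms(3)] unfolding orbit_def by auto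
    then show False using small by blast
  qed
  then have "closedin (cyl_top X) orbit"
    using t1_space_cyl_top orbit_subset_path_space[OF assms(3)]
    unfolding t1_space_closedin_finite topspace_cyl_top orbit_def by blast
  then have "cyl_top X closure_of orbit = orbit" by (simp add: closure_of_eq)
  moreover have "cyl_top X closure_of orbit = X"
    using assms(1,3) unfolding minimal_action_def orbit_def by blast
  ultimately show False using \<open>finite orbit\<close> assms(2) by simp
qed

text \<open>The sets where the class has at least \<open>M\<close> elements are open and cover the compact
  space \<open>X\<close>; by monotonicity a single level works everywhere.\<close>
lemma card_prefix_class_eventually_large:
  assumes "minimal_action X" "infinite X"
  shows "\<exists>m0. \<forall>m\<ge>m0. \<forall>x\<in>X. M \<le> card (prefix_class m x)"
proof -
  define U where "U m = {x \<in> X. M \<le> card (prefix_class m x)}" for m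
  have "openin (cyl_top X) (U m)" for m
  proof -
    have "U m = {x \<in> X. path_prefix m x \<in> {l. M \<le> card {l' \<in> prefixes m. end_vertex l' = end_vertex l}}}"
      unfolding U_def prefix_class_def by simp
    moreover have "openin (cyl_top X)
        {x \<in> X. path_prefix m x \<in> {l. M \<le> card {l' \<in> prefixes m. end_vertex l' = end_vertex l}}}"
      by (rule openin_cyl_top_prefix)
    ultimately show ?thesis by simp
  qed
  moreover have "X \<subseteq> \<Union>(range U)"
    using card_prefix_class_unbounded[OF assms] unfolding U_def by blast
  ultimately obtain F where F: "finite F" "F \<subseteq> range U" "X \<subseteq> \<Union>F"
    using compactin_path_space unfolding compactin_def by (metis (no_types, lifting) imageE)
  obtain J where J: "finite J" "F = U ` J" using F(1,2) by (meson finite_subset_image)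
  define m0 where "m0 = Max (insert 0 J)"
  have "M \<le> card (prefix_class m x)" if m: "m0 \<le> m" and x: "x \<in> X" for m x
  proof -
    obtain j where j: "j \<in> J" "x \<in> U j" using F(3) J(2) x by auto
    then have "j \<le> m" using J(1) m unfolding m0_def by (meson Max_ge finite_insert insertCI le_trans)
    moreover have "M \<le> card (prefix_class j x)" using j(2) unfolding U_def by simp
    ultimately show ?thesis using card_prefix_class_mono[OF x, of j m] by linarith
  qed
  then show ?thesis by blast
qed

lemma cylinder_in_sets:
  "\<mu> \<in> inv_measures X \<Longrightarrow> {x\<in>X. path_prefix m x \<in> B} \<in> sets \<mu>"
  unfolding inv_measures_def using openin_cyl_top_prefix by (auto intro: sigma_sets.Basic)

lemma measure_cylinder_le_inverse:
  assumes \<mu>: "\<mu> \<in> inv_measures X" and "B \<subseteq> prefixes m"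
    and G: "\<forall>k<N. inverse_prefix_perms m (G k) (G k)"
    and disj: "\<forall>k<N. \<forall>k'<N. k \<noteq> k' \<longrightarrow> G k ` B \<inter> G k' ` B = {}"
  shows "real N * measure \<mu> {x\<in>X. path_prefix m x \<in> B} \<le> 1"
proof -
  have ps: "prob_space \<mu>"
    and inv: "\<forall>g\<in>full_group X. \<forall>A\<in>sets \<mu>. emeasure \<mu> (g -` A \<inter> X) = emeasure \<mu> A"
    using \<mu> unfolding inv_measures_def by auto
  define C where "C k = {x\<in>X. path_prefix m x \<in> G k ` B}" for k
  have "measure \<mu> (C k) = measure \<mu> {x\<in>X. path_prefix m x \<in> B}" if "k < N" for k
  proof -
    have Gk: "end_preserving m (G k)" "\<forall>l\<in>prefixes m. G k (G k l) = l"
      using G that unfolding inverse_prefix_perms_def by auto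
    have "prefix_map m (G k) -` C k \<inter> X = {x\<in>X. path_prefix m x \<in> B}"
    proof (intro equalityI subsetI)
      fix x assume "x \<in> prefix_map m (G k) -` C k \<inter> X"
      then obtain b where "x \<in> X" "b \<in> B" "G k (path_prefix m x) = G k b"
        using path_prefix_prefix_map[OF Gk(1)] unfolding C_def by auto
      moreover have "path_prefix m x \<in> prefixes m" using \<open>x \<in> X\<close> unfolding prefixes_def by auto
      ultimately show "x \<in> {x\<in>X. path_prefix m x \<in> B}"
        using Gk(2) \<open>B \<subseteq> prefixes m\<close> by (metis (mono_tags, lifting) mem_Collect_eq subsetD)
    next
      fix x assume "x \<in> {x\<in>X. path_prefix m x \<in> B}"
      then show "x \<in> prefix_map m (G k) -` C k \<inter> X"
        using prefix_map_in_path_space[OF Gk(1)] path_prefix_prefix_map[OF Gk(1)] unfolding C_def by auto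
    qed
    moreover have "emeasure \<mu> (prefix_map m (G k) -` C k \<inter> X) = emeasure \<mu> (C k)"
      using inv prefix_map_in_full_group G that cylinder_in_sets[OF \<mu>] unfolding C_def by blast
    ultimately show ?thesis unfolding measure_def by simp
  qed
  moreover have "disjoint_family_on C {..<N}"
    using disj unfolding disjoint_family_on_def C_def by auto
  then have "measure \<mu> (\<Union>k<N. C k) = (\<Sum>k<N. measure \<mu> (C k))"
    using cylinder_in_sets[OF \<mu>] unfolding C_def
    by (intro finite_measure.finite_measure_finite_Union prob_space.finite_measure[OF ps]) auto
  ultimately have "measure \<mu> (\<Union>k<N. C k) = real N * measure \<mu> {x\<in>X. path_prefix m x \<in> B}"
    by simp
  then show ?thesis using prob_space.prob_le_1[OF ps] by metis
qed

text \<open>A path of length \<open>m > n\<close> is a prefix \<open>p\<close> of length \<open>n\<close> followed by a segment \<open>q\<close>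
  from level \<open>n\<close> to level \<open>m\<close>; the segment is recorded with its start vertex.\<close>
definition segments :: "nat \<Rightarrow> nat \<Rightarrow> ('v \<times> 'e list) set" where
  "segments n m = (\<lambda>l. (end_vertex (take n l), drop n l)) ` prefixes m"

definition segment_ends :: "'v \<times> 'e list \<Rightarrow> 'v \<times> 'v" where
  "segment_ends c = (fst c, rng (last (snd c)))"

lemma finite_segments: "finite (segments n m)"
  unfolding segments_def using finite_prefixes by simp

lemma prefixes_split:
  assumes "n < m" "l \<in> prefixes m"
  shows "take n l \<in> prefixes n" "(end_vertex (take n l), drop n l) \<in> segments n m"
    "end_vertex l = rng (last (drop n l))"
proof -
  obtain x where x: "x \<in> X" "l = path_prefix m x" using assms(2) unfolding prefixes_def by auto
  show "take n l \<in> prefixes n"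
    using x take_path_prefix[of n m x] assms(1) unfolding prefixes_def by auto
  show "(end_vertex (take n l), drop n l) \<in> segments n m" unfolding segments_def using assms(2) by blast
  have "drop n l \<noteq> []" using x assms(1) by simp
  then show "end_vertex l = rng (last (drop n l))" by (auto simp: end_vertex_def last_drop)
qed

lemma prefixes_decompose:
  assumes "n < m" "l \<in> prefixes m"
  obtains p q where "l = p @ q" "p \<in> prefixes n" "(end_vertex p, q) \<in> segments n m"
  using prefixes_split[OF assms] by (metis append_take_drop_id)

lemma prefixes_append:
  assumes "n < m" "p \<in> prefixes n" "(end_vertex p, q) \<in> segments n m"
  shows "p @ q \<in> prefixes m" "end_vertex (p @ q) = rng (last q)"
proof -
  obtain l where l: "l \<in> prefixes m" "end_vertex p = end_vertex (take n l)" "q = drop n l"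
    using assms(3) unfolding segments_def by auto
  obtain z where z: "z \<in> X" "l = path_prefix m z" using l(1) unfolding prefixes_def by auto
  obtain y where y: "y \<in> X" "p = path_prefix n y" using assms(2) unfolding prefixes_def by auto
  have "src (y n) = src (z n)"
    using end_vertex_path_prefix[OF y(1), of n] end_vertex_path_prefix[OF z(1), of n] l(2) y(2) z(2)
      take_path_prefix[of n m z] assms(1) by simp
  then have "graft n y z \<in> X" using graft_in_path_space y(1) z(1) by blast
  moreover have "path_prefix m (graft n y z) = p @ q"
  proof -
    have "take n (path_prefix m (graft n y z)) = p"
      using take_path_prefix[of n m "graft n y z"] assms(1) path_prefix_graft[of n y z] y(2) by simp
    moreover have "drop n (path_prefix m (graft n y z)) = q"
      using l(3) z(2) by (simp add: drop_path_prefix graft_def cong: map_cong)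
    ultimately show ?thesis by (metis append_take_drop_id)
  qed
  ultimately show "p @ q \<in> prefixes m" unfolding prefixes_def by (metis image_eqI)
  have "q \<noteq> []" using l(3) z(2) assms(1) by simp
  then show "end_vertex (p @ q) = rng (last q)" by (simp add: end_vertex_def)
qed

lemma prefix_action_append_segment:
  assumes "s \<in> full_group_n X n" "n < m" "p \<in> prefixes n" "(end_vertex p, q) \<in> segments n m"
  shows "prefix_action m s (p @ q) = prefix_action n s p @ q"
proof -
  obtain x where x: "x \<in> X" "path_prefix m x = p @ q"
    using prefixes_append(1)[OF assms(2-4)] unfolding prefixes_def by auto
  have "length p = n" using assms(3) length_prefixes by blast
  then have "path_prefix n x = p" "drop n (path_prefix m x) = q"
    using take_path_prefix[of n m x] assms(2) x(2) by (metis append_eq_conv_conj less_imp_le)+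
  then show ?thesis using prefix_action_append[OF assms(1) less_imp_le[OF assms(2)] x(1)] x(2) by simp
qed

end

section \<open>The construction\<close>

locale conjugates_construction = bratteli_diagram V E src rng v0
  for V :: "nat \<Rightarrow> 'v set" and E :: "nat \<Rightarrow> 'e set" and src rng :: "'e \<Rightarrow> 'v" and v0 :: 'v +
  fixes n m :: nat and s :: "(nat \<Rightarrow> 'e) \<Rightarrow> nat \<Rightarrow> 'e" and r :: nat
    and act :: "nat \<Rightarrow> 'v \<times> 'e list \<Rightarrow> 'v \<times> 'e list" and bad :: "('v \<times> 'e list) set"
    and colour :: "'e list \<Rightarrow> nat"
  assumes s: "s \<in> full_group_n X n" and n_less_m: "n < m"
    and act: "xor_action (2 ^ (2 * r)) (segments n m) act"
    and act_ends: "\<forall>d<2 ^ (2 * r). \<forall>c\<in>segments n m. segment_ends (act d c) = segment_ends c"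
    and act_free: "\<forall>c\<in>segments n m - bad. \<forall>d<2 ^ (2 * r). act d c = c \<longrightarrow> d = 0"
    and bad_segments: "bad \<subseteq> segments n m"
    and card_bad: "\<forall>w. card {c\<in>bad. segment_ends c = w} < 2 ^ (2 * r)"
    and colour: "\<forall>p\<in>prefixes n. prefix_action n s p \<noteq> p \<longrightarrow>
                   colour p < 3 \<and> colour (prefix_action n s p) \<noteq> colour p"
begin

abbreviation "\<sigma> \<equiv> prefix_action n s"
abbreviation "\<sigma>_inv \<equiv> the_inv_into (prefixes n) \<sigma>"
abbreviation "\<sigma>\<^sub>m \<equiv> prefix_action m s"
abbreviation "\<sigma>\<^sub>m_inv \<equiv> the_inv_into (prefixes m) \<sigma>\<^sub>m"
abbreviation K :: nat where "K \<equiv> 2 ^ (2 * r)"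

definition moved :: "'e list set" where
  "moved = {p \<in> prefixes n. \<sigma> p \<noteq> p}"

definition seg_act :: "nat \<Rightarrow> 'v \<Rightarrow> 'e list \<Rightarrow> 'e list" where
  "seg_act d v q = snd (act d (v, q))"

definition label :: "nat \<Rightarrow> 'e list \<Rightarrow> nat" where
  "label a p = colour_embedding r (colour p) a"

text \<open>The involution \<open>h\<^sub>a\<close>: it keeps the first \<open>n\<close> edges and, when they are moved by \<open>s\<close>,
  acts on the rest of the path by the label of \<open>a\<close> belonging to their colour.\<close>
definition twist :: "nat \<Rightarrow> 'e list \<Rightarrow> 'e list" where
  "twist a l = (if take n l \<in> moved
     then take n l @ seg_act (label a (take n l)) (end_vertex (take n l)) (drop n l) else l)"

definition conjugate :: "nat \<Rightarrow> (nat \<Rightarrow> 'e) \<Rightarrow> nat \<Rightarrow> 'e" where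
  "conjugate a = prefix_map m (twist a) \<circ> s \<circ> inv (prefix_map m (twist a))"

definition ratio :: "nat \<Rightarrow> nat \<Rightarrow> 'e list \<Rightarrow> 'e list" where
  "ratio a b = (twist a \<circ> \<sigma>\<^sub>m \<circ> twist a) \<circ> (twist b \<circ> \<sigma>\<^sub>m_inv \<circ> twist b)"

definition bad_prefixes :: "'e list set" where
  "bad_prefixes = {l \<in> prefixes m. take n l \<in> moved \<and> (end_vertex (take n l), drop n l) \<in> bad}"

lemma s_full_group_n_m: "s \<in> full_group_n X m"
  using full_group_n_mono[OF s] n_less_m by simp

lemma
  assumes "(v, q) \<in> segments n m" "d < K"
  shows act_eq_seg_act: "act d (v, q) = (v, seg_act d v q)"
    and seg_act_in_segments: "(v, seg_act d v q) \<in> segments n m"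
    and rng_last_seg_act: "rng (last (seg_act d v q)) = rng (last q)"
proof -
  have "act d (v, q) \<in> segments n m" "segment_ends (act d (v, q)) = segment_ends (v, q)"
    using act act_ends assms unfolding xor_action_def by auto
  then show "act d (v, q) = (v, seg_act d v q)" "(v, seg_act d v q) \<in> segments n m"
    "rng (last (seg_act d v q)) = rng (last q)"
    unfolding segment_ends_def seg_act_def by (metis prod.collapse fst_conv prod.inject)+
qed

lemma seg_act_xor:
  assumes "(v, q) \<in> segments n m" "d < K" "d' < K"
  shows "seg_act d v (seg_act d' v q) = seg_act (d XOR d') v q"
proof -
  have "act d (act d' (v, q)) = act (d XOR d') (v, q)" using act assms unfolding xor_action_def by auto
  then show ?thesis using act_eq_seg_act[OF assms(1) assms(3)] unfolding seg_act_def by simp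
qed

lemma seg_act_0: "(v, q) \<in> segments n m \<Longrightarrow> seg_act 0 v q = q"
  using act unfolding xor_action_def seg_act_def by auto

lemma seg_act_free:
  "(v, q) \<in> segments n m \<Longrightarrow> (v, q) \<notin> bad \<Longrightarrow> d < K \<Longrightarrow> seg_act d v q = q \<Longrightarrow> d = 0"
  using act_free act_eq_seg_act by fastforce

lemma label_less: "a < 2 ^ r \<Longrightarrow> label a p < K"
  unfolding label_def by (rule colour_embedding_less)

lemma
  assumes "p \<in> prefixes n"
  shows sigma_in: "\<sigma> p \<in> prefixes n" and end_vertex_sigma: "end_vertex (\<sigma> p) = end_vertex p"
    and sigma_inv_in: "\<sigma>_inv p \<in> prefixes n" and sigma_sigma_inv: "\<sigma> (\<sigma>_inv p) = p"
    and sigma_inv_sigma: "\<sigma>_inv (\<sigma> p) = p" and end_vertex_sigma_inv: "end_vertex (\<sigma>_inv p) = end_vertex p"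
proof -
  have "end_preserving n \<sigma>" "end_preserving n \<sigma>_inv"
    "\<forall>l\<in>prefixes n. \<sigma> (\<sigma>_inv l) = l" "\<forall>l\<in>prefixes n. \<sigma>_inv (\<sigma> l) = l"
    using inverse_prefix_perms_prefix_action[OF s] unfolding inverse_prefix_perms_def by blast+
  then show "\<sigma> p \<in> prefixes n" "end_vertex (\<sigma> p) = end_vertex p" "\<sigma>_inv p \<in> prefixes n"
    "\<sigma> (\<sigma>_inv p) = p" "\<sigma>_inv (\<sigma> p) = p" "end_vertex (\<sigma>_inv p) = end_vertex p"
    using assms unfolding end_preserving_def by blast+
qed

lemma
  assumes "p \<in> moved"
  shows sigma_moved: "\<sigma> p \<in> moved" and sigma_inv_moved: "\<sigma>_inv p \<in> moved"
proof -
  have p: "p \<in> prefixes n" "\<sigma> p \<noteq> p" using assms unfolding moved_def by auto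
  have "\<sigma> (\<sigma> p) \<noteq> \<sigma> p"
  proof
    assume "\<sigma> (\<sigma> p) = \<sigma> p"
    then have "\<sigma>_inv (\<sigma> (\<sigma> p)) = \<sigma>_inv (\<sigma> p)" by simp
    then show False using sigma_inv_sigma[OF sigma_in[OF p(1)]] sigma_inv_sigma[OF p(1)] p(2) by simp
  qed
  then show "\<sigma> p \<in> moved" using sigma_in[OF p(1)] unfolding moved_def by simp
  have "\<sigma> (\<sigma>_inv p) \<noteq> \<sigma>_inv p"
  proof
    assume "\<sigma> (\<sigma>_inv p) = \<sigma>_inv p"
    then have "\<sigma>_inv p = p" using sigma_sigma_inv[OF p(1)] by simp
    then show False using sigma_sigma_inv[OF p(1)] p(2) by simp
  qed
  then show "\<sigma>_inv p \<in> moved" using sigma_inv_in[OF p(1)] unfolding moved_def by simp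
qed

lemma colour_sigma_inv:
  assumes "p \<in> moved"
  shows "colour p < 3" "colour (\<sigma>_inv p) < 3" "colour (\<sigma>_inv p) \<noteq> colour p"
proof -
  have p: "p \<in> prefixes n" "\<sigma> p \<noteq> p" and q: "\<sigma>_inv p \<in> prefixes n" "\<sigma> (\<sigma>_inv p) \<noteq> \<sigma>_inv p"
    using assms sigma_inv_moved[OF assms] unfolding moved_def by auto
  show "colour p < 3" using bspec[OF colour p(1)] p(2) by blast
  show "colour (\<sigma>_inv p) < 3" "colour (\<sigma>_inv p) \<noteq> colour p"
    using bspec[OF colour q(1)] q(2) sigma_sigma_inv[OF p(1)] by auto
qed

lemma sigma_m_append:
  "p \<in> prefixes n \<Longrightarrow> (end_vertex p, q) \<in> segments n m \<Longrightarrow> \<sigma>\<^sub>m (p @ q) = \<sigma> p @ q"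
  by (rule prefix_action_append_segment[OF s n_less_m])

lemma sigma_m_inv_append:
  assumes "p \<in> prefixes n" "(end_vertex p, q) \<in> segments n m"
  shows "\<sigma>\<^sub>m_inv (p @ q) = \<sigma>_inv p @ q"
proof -
  have "(end_vertex (\<sigma>_inv p), q) \<in> segments n m" using assms end_vertex_sigma_inv by simp
  then have "\<sigma>\<^sub>m (\<sigma>_inv p @ q) = p @ q" "\<sigma>_inv p @ q \<in> prefixes m"
    using sigma_m_append sigma_inv_in[OF assms(1)] sigma_sigma_inv[OF assms(1)]
      prefixes_append(1)[OF n_less_m] by auto
  then show ?thesis
    using bij_betw_prefix_action[OF s_full_group_n_m] by (metis bij_betw_def the_inv_into_f_f)
qed

lemma twist_moved:
  "p \<in> moved \<Longrightarrow> twist a (p @ q) = p @ seg_act (label a p) (end_vertex p) q"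
  using length_prefixes unfolding twist_def moved_def by auto

lemma twist_unmoved: "p \<in> prefixes n \<Longrightarrow> p \<notin> moved \<Longrightarrow> twist a (p @ q) = p @ q"
  using length_prefixes unfolding twist_def by auto

lemma inverse_prefix_perms_twist:
  assumes "a < 2 ^ r"
  shows "inverse_prefix_perms m (twist a) (twist a)"
proof -
  have "twist a l \<in> prefixes m \<and> end_vertex (twist a l) = end_vertex l \<and> twist a (twist a l) = l"
    if l: "l \<in> prefixes m" for l
  proof -
    obtain p q where pq: "l = p @ q" "p \<in> prefixes n" "(end_vertex p, q) \<in> segments n m"
      using prefixes_decompose[OF n_less_m l] .
    show ?thesis
    proof (cases "p \<in> moved")
      case True
      define d where "d = label a p"
      have d: "d < K" using label_less[OF assms] d_def by simp
      have q': "(end_vertex p, seg_act d (end_vertex p) q) \<in> segments n m"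
        using seg_act_in_segments[OF pq(3) d] .
      have "twist a l = p @ seg_act d (end_vertex p) q"
        using twist_moved[OF True] pq(1) d_def by simp
      moreover have "seg_act d (end_vertex p) (seg_act d (end_vertex p) q) = q"
        using seg_act_xor[OF pq(3) d d] seg_act_0[OF pq(3)] by simp
      ultimately show ?thesis
        using twist_moved[OF True] prefixes_append[OF n_less_m pq(2)] q' pq
          rng_last_seg_act[OF pq(3) d] d_def by simp
    next
      case False
      then show ?thesis using twist_unmoved[OF pq(2) False] pq(1) l by simp
    qed
  qed
  then show ?thesis unfolding inverse_prefix_perms_def end_preserving_def by blast
qed

lemma inverse_prefix_perms_twisted_sigma:
  "a < 2 ^ r \<Longrightarrow> inverse_prefix_perms m (twist a \<circ> \<sigma>\<^sub>m \<circ> twist a) (twist a \<circ> \<sigma>\<^sub>m_inv \<circ> twist a)"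
  using inverse_prefix_perms_comp[OF inverse_prefix_perms_comp, OF inverse_prefix_perms_twist
      inverse_prefix_perms_prefix_action[OF s_full_group_n_m] inverse_prefix_perms_twist]
  by (simp add: comp_assoc)

lemma end_preserving_twist: "a < 2 ^ r \<Longrightarrow> end_preserving m (twist a)"
  using inverse_prefix_perms_twist unfolding inverse_prefix_perms_def by blast

lemma end_preserving_sigma_m: "end_preserving m \<sigma>\<^sub>m"
  by (rule end_preserving_prefix_action[OF s_full_group_n_m])

lemma conjugate_eq_prefix_map:
  assumes "a < 2 ^ r"
  shows "conjugate a = prefix_map m (twist a \<circ> \<sigma>\<^sub>m \<circ> twist a)"
proof -
  have "conjugate a = prefix_map m (twist a) \<circ> (prefix_map m \<sigma>\<^sub>m \<circ> prefix_map m (twist a))"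
    unfolding conjugate_def inv_prefix_map[OF inverse_prefix_perms_twist[OF assms]]
    by (simp add: prefix_map_prefix_action[OF s_full_group_n_m] comp_assoc)
  also have "\<dots> = prefix_map m (twist a \<circ> (\<sigma>\<^sub>m \<circ> twist a))"
    by (simp add: prefix_map_comp end_preserving_twist[OF assms] end_preserving_sigma_m
        end_preserving_comp)
  finally show ?thesis by (simp add: comp_assoc)
qed

lemma conjugate_in_full_group: "a < 2 ^ r \<Longrightarrow> conjugate a \<in> full_group X"
  using prefix_map_in_full_group[OF inverse_prefix_perms_twisted_sigma] conjugate_eq_prefix_map
  by simp

lemma conj_in_conjugate: "a < 2 ^ r \<Longrightarrow> conj_in X (conjugate a) s"
  unfolding conj_in_def conjugate_def
  by (rule bexI[of _ "prefix_map m (twist a)"]) (simp_all add: prefix_map_in_full_group[OF inverse_prefix_perms_twist])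

lemma twisted_sigma_fixed_iff:
  assumes "a < 2 ^ r" "l \<in> prefixes m"
  shows "(twist a \<circ> \<sigma>\<^sub>m \<circ> twist a) l = l \<longleftrightarrow> \<sigma>\<^sub>m l = l"
proof -
  obtain p q where pq: "l = p @ q" "p \<in> prefixes n" "(end_vertex p, q) \<in> segments n m"
    using prefixes_decompose[OF n_less_m assms(2)] .
  have "length p = n" "length (\<sigma> p) = n" using pq(2) sigma_in length_prefixes by blast+
  show ?thesis
  proof (cases "p \<in> moved")
    case True
    define q' where "q' = seg_act (label a p) (end_vertex p) q"
    have "(end_vertex p, q') \<in> segments n m"
      using seg_act_in_segments[OF pq(3) label_less[OF assms(1)]] q'_def by simp
    then have "(twist a \<circ> \<sigma>\<^sub>m \<circ> twist a) l = \<sigma> p @ seg_act (label a (\<sigma> p)) (end_vertex p) q'"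
      using twist_moved[OF True] twist_moved[OF sigma_moved[OF True]] sigma_m_append[OF pq(2)]
        end_vertex_sigma[OF pq(2)] pq(1) q'_def by simp
    moreover have "\<sigma> p \<noteq> p" using True unfolding moved_def by simp
    ultimately show ?thesis
      using sigma_m_append[OF pq(2,3)] pq(1) \<open>length p = n\<close> \<open>length (\<sigma> p) = n\<close> by auto
  next
    case False
    then have "\<sigma> p = p" using pq(2) unfolding moved_def by simp
    then show ?thesis using twist_unmoved[OF pq(2) False] sigma_m_append[OF pq(2,3)] pq(1) by simp
  qed
qed

lemma supp_conjugate:
  assumes "a < 2 ^ r"
  shows "supp X (conjugate a) = supp X s"
proof -
  have "supp X (conjugate a) = {x \<in> X. (twist a \<circ> \<sigma>\<^sub>m \<circ> twist a) (path_prefix m x) \<noteq> path_prefix m x}"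
    unfolding conjugate_eq_prefix_map[OF assms]
    by (rule supp_prefix_map) (simp add: end_preserving_twist[OF assms] end_preserving_sigma_m
        end_preserving_comp)
  also have "\<dots> = {x \<in> X. \<sigma>\<^sub>m (path_prefix m x) \<noteq> path_prefix m x}"
    using twisted_sigma_fixed_iff[OF assms] unfolding prefixes_def by blast
  also have "\<dots> = supp X s"
    using supp_prefix_map[OF end_preserving_sigma_m] by (simp add: prefix_map_prefix_action[OF s_full_group_n_m])
  finally show ?thesis .
qed

lemma ratio_moved:
  assumes "a < 2 ^ r" "b < 2 ^ r" "p \<in> moved" "(end_vertex p, q) \<in> segments n m"
  shows "ratio a b (p @ q) =
    p @ seg_act ((label a p XOR label b p) XOR (label a (\<sigma>_inv p) XOR label b (\<sigma>_inv p))) (end_vertex p) q"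
proof -
  define v where "v = end_vertex p"
  have p: "p \<in> prefixes n" using assms(3) unfolding moved_def by simp
  have p': "\<sigma>_inv p \<in> moved" "end_vertex (\<sigma>_inv p) = v" "\<sigma> (\<sigma>_inv p) = p" "\<sigma>_inv p \<in> prefixes n"
    using sigma_inv_moved[OF assms(3)] end_vertex_sigma_inv[OF p] sigma_sigma_inv[OF p]
      sigma_inv_in[OF p] v_def by auto
  have vq: "(v, q) \<in> segments n m" using assms(4) v_def by simp
  have la: "label a p < K" "label a (\<sigma>_inv p) < K" and lb: "label b p < K" "label b (\<sigma>_inv p) < K"
    using label_less assms(1,2) by auto
  define q1 where "q1 = seg_act (label b p) v q"
  define q2 where "q2 = seg_act (label b (\<sigma>_inv p)) v q1"
  define q3 where "q3 = seg_act (label a (\<sigma>_inv p)) v q2"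
  have q1: "(v, q1) \<in> segments n m" using seg_act_in_segments[OF vq lb(1)] q1_def by simp
  have q2: "(v, q2) \<in> segments n m" using seg_act_in_segments[OF q1 lb(2)] q2_def by simp
  have q3: "(v, q3) \<in> segments n m" using seg_act_in_segments[OF q2 la(2)] q3_def by simp
  have "ratio a b (p @ q) = twist a (\<sigma>\<^sub>m (twist a (twist b (\<sigma>\<^sub>m_inv (p @ q1)))))"
    unfolding ratio_def using twist_moved[OF assms(3)] q1_def v_def by simp
  also have "\<dots> = twist a (\<sigma>\<^sub>m (\<sigma>_inv p @ q3))"
    using sigma_m_inv_append[OF p] q1 twist_moved[OF p'(1)] p'(2) q2_def q3_def v_def by simp
  also have "\<dots> = p @ seg_act (label a p) v q3"
    using sigma_m_append[OF p'(4)] q3 p'(2,3) twist_moved[OF assms(3)] v_def by simp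
  also have "seg_act (label a p) v q3 =
      seg_act (label a p XOR (label a (\<sigma>_inv p) XOR (label b (\<sigma>_inv p) XOR label b p))) v q"
    unfolding q3_def q2_def q1_def
    using seg_act_xor[OF vq lb(2) lb(1)] seg_act_xor[OF vq la(2) xor_less_power2[OF lb(2,1)]]
      seg_act_xor[OF vq la(1) xor_less_power2[OF la(2) xor_less_power2[OF lb(2,1)]]]
    by simp
  finally show ?thesis unfolding v_def by (simp add: xor.assoc xor.commute xor.left_commute)
qed

lemma ratio_involution:
  assumes "a < 2 ^ r" "b < 2 ^ r" "l \<in> prefixes m"
  shows "ratio a b (ratio a b l) = l"
proof -
  obtain p q where pq: "l = p @ q" "p \<in> prefixes n" "(end_vertex p, q) \<in> segments n m"
    using prefixes_decompose[OF n_less_m assms(3)] .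
  show ?thesis
  proof (cases "p \<in> moved")
    case True
    define d where "d = (label a p XOR label b p) XOR (label a (\<sigma>_inv p) XOR label b (\<sigma>_inv p))"
    have d: "d < K" unfolding d_def using label_less assms(1,2) xor_less_power2 by metis
    have "ratio a b l = p @ seg_act d (end_vertex p) q"
      using ratio_moved[OF assms(1,2) True pq(3)] pq(1) d_def by simp
    moreover have "ratio a b (p @ seg_act d (end_vertex p) q) =
        p @ seg_act d (end_vertex p) (seg_act d (end_vertex p) q)"
      using ratio_moved[OF assms(1,2) True seg_act_in_segments[OF pq(3) d]] d_def by simp
    ultimately show ?thesis using seg_act_xor[OF pq(3) d d] seg_act_0[OF pq(3)] pq(1) by simp
  next
    case False
    then have "\<sigma> p = p" "\<sigma>_inv p = p" using pq(2) sigma_inv_sigma[OF pq(2)] unfolding moved_def by auto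
    then show ?thesis
      using twist_unmoved[OF pq(2) False] sigma_m_append[OF pq(2,3)] sigma_m_inv_append[OF pq(2,3)] pq(1)
      unfolding ratio_def by simp
  qed
qed

text \<open>On a moved prefix \<open>p\<close> the label by which \<open>ratio a b\<close> acts is nonzero, because \<open>p\<close> and
  \<open>\<sigma>\<^sup>-\<^sup>1 p\<close> have different colours; so only bad segments are fixed.\<close>
lemma ratio_fixed_imp_bad:
  assumes "a < 2 ^ r" "b < 2 ^ r" "a \<noteq> b" "l \<in> prefixes m" "\<sigma>\<^sub>m l \<noteq> l" "ratio a b l = l"
  shows "l \<in> bad_prefixes"
proof -
  obtain p q where pq: "l = p @ q" "p \<in> prefixes n" "(end_vertex p, q) \<in> segments n m"
    using prefixes_decompose[OF n_less_m assms(4)] .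
  have "length p = n" using pq(2) length_prefixes by blast
  have "p \<in> moved"
    using assms(5) sigma_m_append[OF pq(2,3)] pq(1,2) unfolding moved_def by auto
  define d where "d = (label a p XOR label b p) XOR (label a (\<sigma>_inv p) XOR label b (\<sigma>_inv p))"
  have d: "d < K" unfolding d_def using label_less assms(1,2) xor_less_power2 by metis
  have "d \<noteq> 0"
    unfolding d_def label_def
    using colour_embedding_xor_ne_0[OF assms(1-3)] colour_sigma_inv[OF \<open>p \<in> moved\<close>] by metis
  moreover have "seg_act d (end_vertex p) q = q"
    using ratio_moved[OF assms(1,2) \<open>p \<in> moved\<close> pq(3)] assms(6) pq(1) d_def by simp
  ultimately have "(end_vertex p, q) \<in> bad" using seg_act_free[OF pq(3) _ d] by blast
  then show ?thesis
    unfolding bad_prefixes_def using assms(4) pq(1) \<open>length p = n\<close> \<open>p \<in> moved\<close> by simp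
qed

lemma end_preserving_ratio: "a < 2 ^ r \<Longrightarrow> b < 2 ^ r \<Longrightarrow> end_preserving m (ratio a b)"
  unfolding ratio_def using inverse_prefix_perms_twisted_sigma end_preserving_comp
  unfolding inverse_prefix_perms_def by blast

lemma conjugate_ratio_eq_prefix_map:
  assumes "a < 2 ^ r" "b < 2 ^ r"
  shows "conjugate a \<circ> inv (conjugate b) = prefix_map m (ratio a b)"
proof -
  have "inv (conjugate b) = prefix_map m (twist b \<circ> \<sigma>\<^sub>m_inv \<circ> twist b)"
    unfolding conjugate_eq_prefix_map[OF assms(2)]
    by (rule inv_prefix_map[OF inverse_prefix_perms_twisted_sigma[OF assms(2)]])
  moreover have "end_preserving m (twist b \<circ> \<sigma>\<^sub>m_inv \<circ> twist b)"
    using inverse_prefix_perms_twisted_sigma[OF assms(2)] unfolding inverse_prefix_perms_def by blast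
  ultimately show ?thesis
    unfolding conjugate_eq_prefix_map[OF assms(1)] ratio_def by (simp add: prefix_map_comp)
qed

lemma even_cycles_conjugate_ratio:
  assumes "a < 2 ^ r" "b < 2 ^ r"
  shows "even_cycles X (conjugate a \<circ> inv (conjugate b))"
proof -
  have "prefix_map m (ratio a b) \<circ> prefix_map m (ratio a b) = id"
    using prefix_map_comp[OF end_preserving_ratio[OF assms], of "ratio a b"]
      prefix_map_eq_id[of m "ratio a b \<circ> ratio a b"] ratio_involution[OF assms] by simp
  then have "\<forall>x\<in>X. prefix_map m (ratio a b) (prefix_map m (ratio a b) x) = x"
    by (metis comp_apply id_apply)
  then show ?thesis
    unfolding conjugate_ratio_eq_prefix_map[OF assms] by (rule even_cycles_if_involution)
qed

lemma supp_diff_conjugate_ratio_subset: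
  assumes "a < 2 ^ r" "b < 2 ^ r" "a \<noteq> b"
  shows "supp X s - supp X (conjugate a \<circ> inv (conjugate b)) \<subseteq> {x\<in>X. path_prefix m x \<in> bad_prefixes}"
proof
  fix x assume "x \<in> supp X s - supp X (conjugate a \<circ> inv (conjugate b))"
  then have "x \<in> supp X (prefix_map m \<sigma>\<^sub>m)" "x \<notin> supp X (prefix_map m (ratio a b))"
    unfolding conjugate_ratio_eq_prefix_map[OF assms(1,2)] prefix_map_prefix_action[OF s_full_group_n_m] by auto
  then have "x \<in> X" "\<sigma>\<^sub>m (path_prefix m x) \<noteq> path_prefix m x" "ratio a b (path_prefix m x) = path_prefix m x"
    unfolding supp_prefix_map[OF end_preserving_ratio[OF assms(1,2)]]
      supp_prefix_map[OF end_preserving_sigma_m] by auto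
  moreover have "path_prefix m x \<in> prefixes m" using \<open>x \<in> X\<close> unfolding prefixes_def by blast
  ultimately show "x \<in> {x\<in>X. path_prefix m x \<in> bad_prefixes}"
    using ratio_fixed_imp_bad[OF assms] by blast
qed

text \<open>A bad prefix is a moved prefix of length \<open>n\<close> followed by one of fewer than \<open>K\<close> bad
  segments with prescribed end points.\<close>
lemma card_bad_prefixes_end_vertex:
  "card {l\<in>bad_prefixes. end_vertex l = w} \<le> card (prefixes n) * K"
proof -
  define Sig where "Sig = (SIGMA p:moved. {c\<in>bad. segment_ends c = (end_vertex p, w)})"
  have "finite bad" using finite_subset[OF bad_segments finite_segments] .
  have "finite moved" using finite_prefixes unfolding moved_def by simp
  then have "finite Sig" unfolding Sig_def using \<open>finite bad\<close> by (intro finite_SigmaI) auto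
  have "{l\<in>bad_prefixes. end_vertex l = w} \<subseteq> (\<lambda>(p, c). p @ snd c) ` Sig"
  proof
    fix l assume l: "l \<in> {l\<in>bad_prefixes. end_vertex l = w}"
    then have "l \<in> prefixes m" "take n l \<in> moved" "(end_vertex (take n l), drop n l) \<in> bad"
      "end_vertex l = w"
      unfolding bad_prefixes_def by auto
    then have "(take n l, (end_vertex (take n l), drop n l)) \<in> Sig"
      unfolding Sig_def segment_ends_def using prefixes_split(3)[OF n_less_m] by simp
    moreover have "l = (\<lambda>(p, c). p @ snd c) (take n l, (end_vertex (take n l), drop n l))" by simp
    ultimately show "l \<in> (\<lambda>(p, c). p @ snd c) ` Sig" by (rule rev_image_eqI)
  qed
  then have "card {l\<in>bad_prefixes. end_vertex l = w} \<le> card ((\<lambda>(p, c). p @ snd c) ` Sig)"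
    by (rule card_mono[OF finite_imageI[OF \<open>finite Sig\<close>]])
  also have "\<dots> \<le> card Sig" by (rule card_image_le[OF \<open>finite Sig\<close>])
  also have "\<dots> = (\<Sum>p\<in>moved. card {c\<in>bad. segment_ends c = (end_vertex p, w)})"
    unfolding Sig_def using \<open>finite moved\<close> \<open>finite bad\<close> by (subst card_SigmaI) auto
  also have "\<dots> \<le> (\<Sum>p\<in>moved. K)" by (rule sum_mono) (use card_bad in \<open>simp add: less_imp_le\<close>)
  also have "\<dots> = card moved * K" by simp
  also have "\<dots> \<le> card (prefixes n) * K"
    using card_mono[OF finite_prefixes, of moved n] unfolding moved_def by simp
  finally show ?thesis .
qed

text \<open>Since every end-vertex class of paths of length \<open>m\<close> is \<open>N\<close> times larger than the bad
  prefixes in it, these can be moved off themselves \<open>N\<close> times within the full group.\<close>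
lemma measure_bad_prefixes:
  assumes large: "\<forall>x\<in>X. N * (card (prefixes n) * K) \<le> card (prefix_class m x)"
    and \<mu>: "\<mu> \<in> inv_measures X"
  shows "real N * measure \<mu> {x\<in>X. path_prefix m x \<in> bad_prefixes} \<le> 1"
proof -
  have bad_sub: "bad_prefixes \<subseteq> prefixes m" unfolding bad_prefixes_def by auto
  have classes: "N * card {b\<in>bad_prefixes. end_vertex b = w} \<le> card {z\<in>prefixes m. end_vertex z = w}" for w
  proof (cases "{b\<in>bad_prefixes. end_vertex b = w} = {}")
    case True
    then show ?thesis by (simp only: card.empty mult_0_right)
  next
    case False
    then obtain b where b: "b \<in> bad_prefixes" "end_vertex b = w" by auto
    then obtain x where x: "x \<in> X" "b = path_prefix m x" using bad_sub unfolding prefixes_def by auto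
    have "N * card {b\<in>bad_prefixes. end_vertex b = w} \<le> N * (card (prefixes n) * K)"
      using card_bad_prefixes_end_vertex by simp
    also have "\<dots> \<le> card (prefix_class m x)" using large x(1) by blast
    also have "prefix_class m x = {z\<in>prefixes m. end_vertex z = w}"
      unfolding prefix_class_def using b(2) x(2) by simp
    finally show ?thesis .
  qed
  obtain G where G: "\<forall>k<N. (\<forall>z\<in>prefixes m. G k z \<in> prefixes m \<and> end_vertex (G k z) = end_vertex z \<and>
      G k (G k z) = z) \<and> (\<forall>k'<N. k \<noteq> k' \<longrightarrow> G k ` bad_prefixes \<inter> G k' ` bad_prefixes = {})"
    using ex_involutions_disjoint_images_on_fibres[OF finite_prefixes bad_sub classes] by blast
  have "\<forall>k<N. inverse_prefix_perms m (G k) (G k)"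
    using G unfolding inverse_prefix_perms_def end_preserving_def by blast
  moreover have "\<forall>k<N. \<forall>k'<N. k \<noteq> k' \<longrightarrow> G k ` bad_prefixes \<inter> G k' ` bad_prefixes = {}"
    using G by blast
  ultimately show ?thesis by (rule measure_cylinder_le_inverse[OF \<mu> bad_sub])
qed

lemma measure_supp_diff_conjugate_ratio:
  assumes "a < 2 ^ r" "b < 2 ^ r" "a \<noteq> b"
    and "\<forall>x\<in>X. N * (card (prefixes n) * K) \<le> card (prefix_class m x)" and \<mu>: "\<mu> \<in> inv_measures X"
  shows "real N * measure \<mu> (supp X s - supp X (conjugate a \<circ> inv (conjugate b))) \<le> 1"
proof -
  have "finite_measure \<mu>" using \<mu> prob_space.finite_measure unfolding inv_measures_def by blast
  then have "measure \<mu> (supp X s - supp X (conjugate a \<circ> inv (conjugate b))) \<le>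
      measure \<mu> {x\<in>X. path_prefix m x \<in> bad_prefixes}"
    using supp_diff_conjugate_ratio_subset[OF assms(1-3)] cylinder_in_sets[OF \<mu>]
    by (rule finite_measure.finite_measure_mono)
  then have "real N * measure \<mu> (supp X s - supp X (conjugate a \<circ> inv (conjugate b))) \<le>
      real N * measure \<mu> {x\<in>X. path_prefix m x \<in> bad_prefixes}"
    by (rule mult_left_mono) simp
  then show ?thesis using measure_bad_prefixes[OF assms(4) \<mu>] by linarith
qed

end

context bratteli_diagram
begin

lemma ex_colouring_prefix_action:
  assumes s: "s \<in> full_group_n X n"
  shows "\<exists>colour :: 'e list \<Rightarrow> nat. \<forall>p\<in>prefixes n. prefix_action n s p \<noteq> p \<longrightarrow>
           colour p < 3 \<and> colour (prefix_action n s p) \<noteq> colour p"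
proof -
  let ?\<sigma> = "prefix_action n s"
  let ?moved = "{p \<in> prefixes n. ?\<sigma> p \<noteq> p}"
  have inj: "inj_on ?\<sigma> (prefixes n)" using bij_betw_prefix_action[OF s] unfolding bij_betw_def by blast
  then have "inj_on ?\<sigma> ?moved" by (rule inj_on_subset) auto
  moreover have "finite ?moved" using finite_prefixes by simp
  ultimately obtain colour :: "'e list \<Rightarrow> nat" where colour:
    "\<forall>p\<in>?moved. colour p < 3 \<and> (?\<sigma> p \<in> ?moved \<and> ?\<sigma> p \<noteq> p \<longrightarrow> colour (?\<sigma> p) \<noteq> colour p)"
    using inj_on_ex_3_colouring by blast
  have "?\<sigma> p \<in> ?moved" if "p \<in> ?moved" for p
  proof -
    have "?\<sigma> p \<in> prefixes n"
      using that end_preserving_prefix_action[OF s] unfolding end_preserving_def by blast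
    moreover have "?\<sigma> (?\<sigma> p) \<noteq> ?\<sigma> p" using inj that calculation by (auto dest: inj_onD)
    ultimately show ?thesis by blast
  qed
  then show ?thesis using colour by blast
qed

lemma ex_conjugates_with_small_defect:
  assumes "minimal_action X" "infinite X" and s: "s \<in> full_group_n X n"
  shows "\<exists>t :: nat \<Rightarrow> (nat \<Rightarrow> 'e) \<Rightarrow> nat \<Rightarrow> 'e. \<forall>a<2 ^ r.
           t a \<in> full_group X \<and> conj_in X (t a) s \<and> supp X (t a) = supp X s \<and>
           (\<forall>b<2 ^ r. a \<noteq> b \<longrightarrow> even_cycles X (t a \<circ> inv (t b)) \<and>
              (\<forall>\<mu>\<in>inv_measures X. real N * measure \<mu> (supp X s - supp X (t a \<circ> inv (t b))) \<le> 1))"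
proof -
  obtain m0 where m0: "\<forall>m\<ge>m0. \<forall>x\<in>X. N * (card (prefixes n) * 2 ^ (2 * r)) \<le> card (prefix_class m x)"
    using card_prefix_class_eventually_large[OF assms(1,2)] by blast
  define m where "m = max (Suc n) m0"
  have "n < m" and large: "\<forall>x\<in>X. N * (card (prefixes n) * 2 ^ (2 * r)) \<le> card (prefix_class m x)"
    using m0 unfolding m_def by auto
  obtain act bad where act: "xor_action (2 ^ (2 * r)) (segments n m) act"
    "\<forall>d<2 ^ (2 * r). \<forall>c\<in>segments n m. segment_ends (act d c) = segment_ends c"
    "\<forall>c\<in>segments n m - bad. \<forall>d<2 ^ (2 * r). act d c = c \<longrightarrow> d = 0"
    "bad \<subseteq> segments n m" "\<forall>w. card {c\<in>bad. segment_ends c = w} < 2 ^ (2 * r)"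
    using ex_xor_action_on_fibres[OF finite_segments, where j = "2 * r" and \<kappa> = segment_ends] by blast
  obtain colour :: "'e list \<Rightarrow> nat" where colour: "\<forall>p\<in>prefixes n. prefix_action n s p \<noteq> p \<longrightarrow>
      colour p < 3 \<and> colour (prefix_action n s p) \<noteq> colour p"
    using ex_colouring_prefix_action[OF s] by blast
  interpret conjugates_construction V E src rng v0 n m s r act bad colour
    using bratteli s \<open>n < m\<close> act colour by unfold_locales
  show ?thesis
    by (intro exI[of _ conjugate] allI impI conjI ballI)
      (simp_all add: conjugate_in_full_group conj_in_conjugate supp_conjugate
        even_cycles_conjugate_ratio measure_supp_diff_conjugate_ratio[OF _ _ _ large])
qed

end

lemma less_if_mult_le_1:
  fixes x \<epsilon> N :: real
  assumes "0 < \<epsilon>" "1 / \<epsilon> < N" "N * x \<le> 1"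
  shows "x < \<epsilon>"
proof -
  have "0 < N" using assms(1,2) by (metis less_trans zero_less_divide_1_iff)
  then have "x \<le> 1 / N" using assms(3) by (simp add: field_simps)
  also have "1 / N < \<epsilon>" using assms(1,2) \<open>0 < N\<close> by (simp add: field_simps)
  finally show ?thesis .
qed

theorem mainTheorem8:
  fixes V :: "nat \<Rightarrow> 'v set" and E :: "nat \<Rightarrow> 'e set"
    and src rng :: "'e \<Rightarrow> 'v" and v0 :: 'v
    and s :: "(nat \<Rightarrow> 'e) \<Rightarrow> (nat \<Rightarrow> 'e)" and r :: nat and \<epsilon> :: real
  defines "X \<equiv> path_space E src rng v0"
  assumes "bratteli V E src rng v0"
    and "is_cantor_space (cyl_top X)"
    and "minimal_action X"
    and "s \<in> full_group X"
    and "\<epsilon> > 0"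
  shows "\<exists>t :: nat \<Rightarrow> ((nat \<Rightarrow> 'e) \<Rightarrow> (nat \<Rightarrow> 'e)).
           (\<forall>i < 2 ^ r. t i \<in> full_group X \<and> conj_in X (t i) s) \<and>
           (\<forall>i < 2 ^ r. supp X (t i) = supp X s) \<and>
           (\<forall>i < 2 ^ r. \<forall>j < 2 ^ r. i \<noteq> j \<longrightarrow>
               (\<forall>\<mu> \<in> inv_measures X.
                   measure \<mu> (supp X s - supp X (t i \<circ> inv (t j))) < \<epsilon>)) \<and>
           (\<forall>i < 2 ^ r. \<forall>j < 2 ^ r. i \<noteq> j \<longrightarrow> even_cycles X (t i \<circ> inv (t j)))"
proof -
  interpret D: bratteli_diagram V E src rng v0 by unfold_locales (rule assms(2))
  have X: "minimal_action D.X" "infinite D.X"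
    using assms(3,4) D.infinite_path_space unfolding X_def by simp_all
  obtain n where s: "s \<in> full_group_n D.X n" using assms(5) unfolding full_group_def X_def by blast
  obtain N :: nat where N: "1 / \<epsilon> < N" using reals_Archimedean2 by blast
  obtain t :: "nat \<Rightarrow> (nat \<Rightarrow> 'e) \<Rightarrow> nat \<Rightarrow> 'e" where t: "\<forall>a<2 ^ r.
      t a \<in> full_group D.X \<and> conj_in D.X (t a) s \<and> supp D.X (t a) = supp D.X s \<and>
      (\<forall>b<2 ^ r. a \<noteq> b \<longrightarrow> even_cycles D.X (t a \<circ> inv (t b)) \<and>
         (\<forall>\<mu>\<in>inv_measures D.X. real N * measure \<mu> (supp D.X s - supp D.X (t a \<circ> inv (t b))) \<le> 1))"
    using D.ex_conjugates_with_small_defect[OF X s, where N = N and r = r] by (elim exE)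
  show ?thesis
    unfolding X_def
  proof (intro exI[of _ t] conjI allI impI ballI)
    fix i j :: nat and \<mu> assume "i < 2 ^ r" "j < 2 ^ r" "i \<noteq> j" "\<mu> \<in> inv_measures D.X"
    then show "measure \<mu> (supp D.X s - supp D.X (t i \<circ> inv (t j))) < \<epsilon>"
      using t less_if_mult_le_1[OF assms(6) N] by blast
  qed (use t in blast)+
qed

end
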